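(* Let $n\ge2$ and let $A$ be an $n\times n$ irreducible completely positive matrix whose graph $G(A)$ is triangle free. Then the following are equivalent: (a) the comparison matrix $M(A)$ is singular; (b) $A$ has a unique CP factorization; (c) $A$ has a unique minimal CP factorization.
   Context: A symmetric $n\times n$ matrix $A$ is completely positive if $A=BB^T$ for some entrywise nonnegative $n\times k$ matrix $B$; such an equality is a CP factorization of $A$. Only CP factorizations in which the columns of $B$ are pairwise linearly independent are considered, and two CP factorizations $A=BB^T=CC^T$ are considered equal if $C=BP$ for a permutation matrix $P$. The cp-rank of $A$ is the minimal number of columns of such a nonnegative $B$; a CP factorization with that many columns is called minimal. The graph $G(A)$ of a symmetric $n\times n$ matrix $A$ has vertex set $\{1,\dots,n\}$, with $\{i,j\}$ ($i\ne j$) an edge iff $a_{ij}\ne 0$; $A$ is irreducible iff $G(A)$ is connected. A graph is triangle free if it contains no clique on three vertices. The comparison matrix $M(A)$ of a square matrix $A$ is given by $M(A)_{ii}=|a_{ii}|$ and $M(A)_{ij}=-|a_{ij}|$ for $i\ne j$. *)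

theory Defs
  imports "HOL-Analysis.Analysis"
begin

text \<open>An n x k matrix B is represented by its entries B i j, i :: 'n (row), j < k (column).
  B B^T has entries (sum j<k. B i j * B i' j).\<close>

definition nonneg_factor :: "real^'n^'n \<Rightarrow> nat \<Rightarrow> ('n \<Rightarrow> nat \<Rightarrow> real) \<Rightarrow> bool" where
  "nonneg_factor A k B \<longleftrightarrow>
     (\<forall>i. \<forall>j<k. 0 \<le> B i j) \<and>
     (\<forall>i i'. A $ i $ i' = (\<Sum>j<k. B i j * B i' j))"

definition completely_positive :: "real^'n^'n \<Rightarrow> bool" where
  "completely_positive A \<longleftrightarrow> (\<exists>k B. nonneg_factor A k B)"

definition cols_lin_dep :: "('n \<Rightarrow> nat \<Rightarrow> real) \<Rightarrow> nat \<Rightarrow> nat \<Rightarrow> bool" where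
  "cols_lin_dep B j l \<longleftrightarrow> (\<exists>a b. (a \<noteq> 0 \<or> b \<noteq> 0) \<and> (\<forall>i. a * B i j + b * B i l = 0))"

definition cp_factorization :: "real^'n^'n \<Rightarrow> nat \<Rightarrow> ('n \<Rightarrow> nat \<Rightarrow> real) \<Rightarrow> bool" where
  "cp_factorization A k B \<longleftrightarrow> nonneg_factor A k B \<and>
     (\<forall>j<k. \<forall>l<k. j \<noteq> l \<longrightarrow> \<not> cols_lin_dep B j l)"

definition same_factorization :: "nat \<Rightarrow> ('n \<Rightarrow> nat \<Rightarrow> real) \<Rightarrow> nat \<Rightarrow> ('n \<Rightarrow> nat \<Rightarrow> real) \<Rightarrow> bool" where
  "same_factorization k B k' C \<longleftrightarrow> k = k' \<and>
     (\<exists>p. p permutes {..<k} \<and> (\<forall>i. \<forall>j<k. C i j = B i (p j)))"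

definition cp_rank :: "real^'n^'n \<Rightarrow> nat" where
  "cp_rank A = (LEAST k. \<exists>B. nonneg_factor A k B)"

definition minimal_cp_factorization :: "real^'n^'n \<Rightarrow> nat \<Rightarrow> ('n \<Rightarrow> nat \<Rightarrow> real) \<Rightarrow> bool" where
  "minimal_cp_factorization A k B \<longleftrightarrow> cp_factorization A k B \<and> k = cp_rank A"

definition unique_cp_factorization :: "real^'n^'n \<Rightarrow> bool" where
  "unique_cp_factorization A \<longleftrightarrow> (\<exists>k B. cp_factorization A k B) \<and>
     (\<forall>k B k' C. cp_factorization A k B \<and> cp_factorization A k' C \<longrightarrow> same_factorization k B k' C)"

definition unique_minimal_cp_factorization :: "real^'n^'n \<Rightarrow> bool" where
  "unique_minimal_cp_factorization A \<longleftrightarrow> (\<exists>k B. minimal_cp_factorization A k B) \<and>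
     (\<forall>k B k' C. minimal_cp_factorization A k B \<and> minimal_cp_factorization A k' C
        \<longrightarrow> same_factorization k B k' C)"

definition graph_edge :: "real^'n^'n \<Rightarrow> 'n \<Rightarrow> 'n \<Rightarrow> bool" where
  "graph_edge A i j \<longleftrightarrow> i \<noteq> j \<and> A $ i $ j \<noteq> 0"

definition irreducible_mat :: "real^'n^'n \<Rightarrow> bool" where
  "irreducible_mat A \<longleftrightarrow> (\<forall>i j. (graph_edge A)\<^sup>*\<^sup>* i j)"

definition triangle_free_graph :: "real^'n^'n \<Rightarrow> bool" where
  "triangle_free_graph A \<longleftrightarrow>
     \<not> (\<exists>i j l. graph_edge A i j \<and> graph_edge A j l \<and> graph_edge A i l)"

definition comparison_matrix :: "real^'n^'n \<Rightarrow> real^'n^'n" where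
  "comparison_matrix A = (\<chi> i j. if i = j then \<bar>A $ i $ i\<bar> else - \<bar>A $ i $ j\<bar>)"

end

theory Submission
  imports Defs "HOL-Library.Multiset"
begin

(*
  Record a CP factorization by the set of its columns. Since G(A) is triangle free, each column
  is supported on an edge {p,q} (or a vertex), and y^T M(A) y is the sum over the columns of the
  squares (c_p y_p - c_q y_q)^2.

  If M(A) is singular, the sign pattern of this form along the connected graph yields a positive
  kernel vector z, and then c_p z_p = c_q z_q together with c_p c_q = a_pq determines every
  column: the factorization is unique.

  If M(A) is nonsingular, every set of columns can be changed without changing its size. When the
  support of one column lies in that of another, rotate the two columns by a small angle.
  Otherwise each edge carries exactly one column c, and the ratios c_p / c_q are not the
  quotients y_q / y_p of a positive potential y (that y would lie in the kernel of M(A)). Hence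
  some cycle of G(A) has ratio product below 1, and along it the columns can be deformed, keeping
  the products c_p c_q and the diagonal of A, by a second periodic orbit of a composition of
  Moebius maps.
*)

section \<open>Factorizations as sets of columns\<close>

definition lin_dep_pair :: "('n \<Rightarrow> real) \<Rightarrow> ('n \<Rightarrow> real) \<Rightarrow> bool" where
  "lin_dep_pair u w \<longleftrightarrow> (\<exists>a b. (a \<noteq> 0 \<or> b \<noteq> 0) \<and> (\<forall>i. a * u i + b * w i = 0))"

definition cp_columns :: "real^'n^'n \<Rightarrow> ('n \<Rightarrow> real) set \<Rightarrow> bool" where
  "cp_columns A S \<longleftrightarrow> finite S \<and> (\<forall>c\<in>S. \<forall>i. 0 \<le> c i) \<and>
     (\<forall>c\<in>S. \<forall>d\<in>S. c \<noteq> d \<longrightarrow> \<not> lin_dep_pair c d) \<and>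
     (\<forall>i i'. A $ i $ i' = (\<Sum>c\<in>S. c i * c i'))"

definition factor_columns :: "nat \<Rightarrow> ('n \<Rightarrow> nat \<Rightarrow> real) \<Rightarrow> ('n \<Rightarrow> real) list" where
  "factor_columns k B = map (\<lambda>j i. B i j) [0..<k]"

lemma lin_dep_pair_refl: "lin_dep_pair c c"
  unfolding lin_dep_pair_def by (rule exI[of _ 1], rule exI[of _ "-1"]) simp

lemma cols_lin_dep_iff: "cols_lin_dep B j l \<longleftrightarrow> lin_dep_pair (\<lambda>i. B i j) (\<lambda>i. B i l)"
  by (simp add: cols_lin_dep_def lin_dep_pair_def)

lemma nth_factor_columns: "j < k \<Longrightarrow> factor_columns k B ! j = (\<lambda>i. B i j)"
  by (simp add: factor_columns_def)

lemma length_factor_columns [simp]: "length (factor_columns k B) = k"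
  by (simp add: factor_columns_def)

lemma set_factor_columns: "set (factor_columns k B) = (\<lambda>j i. B i j) ` {..<k}"
  by (auto simp: factor_columns_def)

lemma sum_factor_columns: "(\<Sum>j<k. f (\<lambda>i. B i j)) = sum_list (map f (factor_columns k B))"
  by (simp add: factor_columns_def sum_set_upt_conv_sum_list_nat[symmetric] atLeast0LessThan)

lemma nonneg_factor_columns_sum:
  assumes "nonneg_factor A k B"
  shows "A $ i $ i' = sum_list (map (\<lambda>c. c i * c i') (factor_columns k B))"
  using assms sum_factor_columns[where f = "\<lambda>c. c i * c i'" and k = k and B = B]
  by (simp add: nonneg_factor_def)

lemma cp_factorization_columns:
  assumes "cp_factorization A k B"
  shows "distinct (factor_columns k B)" and "cp_columns A (set (factor_columns k B))"
proof -
  have nf: "nonneg_factor A k B" and indep: "\<forall>j<k. \<forall>l<k. j \<noteq> l \<longrightarrow> \<not> cols_lin_dep B j l"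
    using assms unfolding cp_factorization_def by auto
  show dist: "distinct (factor_columns k B)"
  proof (rule distinct_conv_nth[THEN iffD2], intro allI impI)
    fix j l assume "j < length (factor_columns k B)" "l < length (factor_columns k B)" "j \<noteq> l"
    then have "j < k" "l < k" "\<not> lin_dep_pair (\<lambda>i. B i j) (\<lambda>i. B i l)"
      using indep by (auto simp: cols_lin_dep_iff)
    then show "factor_columns k B ! j \<noteq> factor_columns k B ! l"
      by (auto simp: nth_factor_columns lin_dep_pair_refl)
  qed
  show "cp_columns A (set (factor_columns k B))"
    unfolding cp_columns_def
  proof (intro conjI ballI allI impI)
    show "finite (set (factor_columns k B))" by simp
  next
    fix c i assume "c \<in> set (factor_columns k B)"
    then show "0 \<le> c i" using nf by (auto simp: set_factor_columns nonneg_factor_def)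
  next
    fix c d assume "c \<in> set (factor_columns k B)" "d \<in> set (factor_columns k B)" "c \<noteq> d"
    then obtain j l where "j < k" "l < k" "c = (\<lambda>i. B i j)" "d = (\<lambda>i. B i l)"
      by (auto simp: set_factor_columns)
    then show "\<not> lin_dep_pair c d" using indep \<open>c \<noteq> d\<close> by (auto simp: cols_lin_dep_iff)
  next
    fix i i'
    show "A $ i $ i' = (\<Sum>c\<in>set (factor_columns k B). c i * c i')"
      using nonneg_factor_columns_sum[OF nf] dist by (simp add: sum_list_distinct_conv_sum_set)
  qed
qed

lemma card_factor_columns_cp_factorization:
  assumes "cp_factorization A k B"
  shows "card (set (factor_columns k B)) = k"
  using cp_factorization_columns(1)[OF assms] by (simp add: distinct_card)

lemma cp_factorization_of_columns:
  assumes S: "cp_columns A S"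
  obtains B where "cp_factorization A (card S) B" and "set (factor_columns (card S) B) = S"
proof -
  have "finite S" using S by (simp add: cp_columns_def)
  then obtain L where L: "set L = S" "distinct L" using finite_distinct_list by blast
  define B where "B i j = (L ! j) i" for i j
  have cols: "factor_columns (length L) B = L"
    by (rule nth_equalityI) (auto simp: nth_factor_columns B_def)
  have "cp_factorization A (length L) B"
    unfolding cp_factorization_def nonneg_factor_def
  proof (intro conjI allI impI)
    fix i j assume "j < length L"
    then show "0 \<le> B i j" using S L by (auto simp: cp_columns_def B_def)
  next
    fix i i'
    have "A $ i $ i' = sum_list (map (\<lambda>c. c i * c i') L)"
      using S L by (simp add: cp_columns_def sum_list_distinct_conv_sum_set)
    also have "\<dots> = sum_list (map (\<lambda>c. c i * c i') (factor_columns (length L) B))"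
      by (simp add: cols)
    also have "\<dots> = (\<Sum>j<length L. B i j * B i' j)"
      by (simp add: sum_factor_columns[symmetric])
    finally show "A $ i $ i' = (\<Sum>j<length L. B i j * B i' j)" .
  next
    fix j l assume "j < length L" "l < length L" "j \<noteq> l"
    then show "\<not> cols_lin_dep B j l"
      using S L by (auto simp: cp_columns_def cols_lin_dep_iff B_def nth_eq_iff_index_eq)
  qed
  moreover have "card S = length L" using L by (metis distinct_card)
  ultimately show ?thesis using that cols L by simp
qed

lemma same_factorization_iff_columns:
  assumes B: "cp_factorization A k B" and C: "cp_factorization A k' C"
  shows "same_factorization k B k' C \<longleftrightarrow> set (factor_columns k B) = set (factor_columns k' C)"
proof
  assume "same_factorization k B k' C"
  then obtain p where kk: "k = k'" and p: "p permutes {..<k}" and pc: "\<forall>i. \<forall>j<k. C i j = B i (p j)"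
    unfolding same_factorization_def by auto
  have "set (factor_columns k' C) = (\<lambda>j i. B i j) ` (p ` {..<k})"
    using pc by (auto simp: set_factor_columns kk image_iff)
  then show "set (factor_columns k B) = set (factor_columns k' C)"
    by (simp add: permutes_image[OF p] set_factor_columns)
next
  assume "set (factor_columns k B) = set (factor_columns k' C)"
  then have "mset (factor_columns k' C) = mset (factor_columns k B)"
    using cp_factorization_columns(1)[OF B] cp_factorization_columns(1)[OF C]
    by (metis set_eq_iff_mset_eq_distinct)
  then obtain p where p: "p permutes {..<length (factor_columns k B)}"
    and pl: "permute_list p (factor_columns k B) = factor_columns k' C"
    by (rule mset_eq_permutation)
  have kk: "k = k'" using pl by (metis length_factor_columns length_permute_list)
  have "C i j = B i (p j)" if "j < k" for i j
  proof -
    have "factor_columns k' C ! j = factor_columns k B ! p j" using pl permute_list_nth[OF p] that by auto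
    moreover have "p j < k" using permutes_in_image[OF p, of j] that by simp
    ultimately show ?thesis using that kk by (simp add: nth_factor_columns fun_eq_iff)
  qed
  then show "same_factorization k B k' C" using p kk unfolding same_factorization_def by auto
qed

text \<open>Columns that are multiples of each other merge into one column, so every nonnegative
  factorization yields a set of CP columns with at most as many elements.\<close>

definition cp_column_mset :: "real^'n^'n \<Rightarrow> ('n \<Rightarrow> real) multiset \<Rightarrow> bool" where
  "cp_column_mset A M \<longleftrightarrow> (\<forall>c\<in>#M. \<forall>i. 0 \<le> c i) \<and> (\<forall>i i'. A $ i $ i' = (\<Sum>c\<in>#M. c i * c i'))"

lemma merge_dependent_columns:
  assumes "\<forall>i. 0 \<le> c i" "\<forall>i. 0 \<le> d i" "lin_dep_pair c d"
  shows "\<exists>w. (\<forall>i. 0 \<le> w i) \<and> (\<forall>i i'. w i * w i' = c i * c i' + d i * d i')"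
proof -
  obtain a b where ab: "a \<noteq> 0 \<or> b \<noteq> 0" "\<forall>i. a * c i + b * d i = 0"
    using assms(3) unfolding lin_dep_pair_def by auto
  show ?thesis
  proof (cases "b = 0")
    case True
    then have "\<forall>i. c i = 0" using ab by auto
    then show ?thesis using assms(2) by (intro exI[of _ d]) auto
  next
    case False
    define \<mu> where "\<mu> = - a / b"
    have d: "d i = \<mu> * c i" for i
    proof -
      have "b * d i = - a * c i"
        using ab(2) by (simp add: algebra_simps) (metis add.commute add_eq_0_iff)
      then show ?thesis using False by (simp add: \<mu>_def field_simps)
    qed
    define w where "w i = sqrt (1 + \<mu>\<^sup>2) * c i" for i
    have "w i * w i' = c i * c i' + d i * d i'" for i i'
    proof -
      have "w i * w i' = (sqrt (1 + \<mu>\<^sup>2))\<^sup>2 * (c i * c i')"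
        by (simp add: w_def power2_eq_square algebra_simps)
      also have "\<dots> = c i * c i' + d i * d i'" using d by (simp add: power2_eq_square algebra_simps)
      finally show ?thesis .
    qed
    then show ?thesis using assms(1) by (intro exI[of _ w]) (simp add: w_def)
  qed
qed

lemma cp_columns_of_mset_without_dependent_pairs:
  assumes "cp_column_mset A M" "\<forall>c d. {#c, d#} \<subseteq># M \<longrightarrow> \<not> lin_dep_pair c d"
  shows "cp_columns A (set_mset M)" and "card (set_mset M) = size M"
proof -
  obtain xs where xs: "mset xs = M" using ex_mset by blast
  have count: "count M a \<le> 1" for a
  proof (rule ccontr)
    assume "\<not> count M a \<le> 1"
    then have "{#a, a#} \<subseteq># M" by (auto simp: subseteq_mset_def)
    then show False using assms(2) lin_dep_pair_refl by blast
  qed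
  have dist: "distinct xs"
    unfolding distinct_count_atmost_1
  proof
    fix a
    show "count (mset xs) a = (if a \<in> set xs then 1 else 0)"
    proof (cases "a \<in> set xs")
      case True
      then have "count M a > 0" using xs by (metis count_greater_zero_iff in_multiset_in_set)
      then show ?thesis using count[of a] xs True by (auto simp: le_Suc_eq count_eq_zero_iff)
    qed (simp add: count_mset_0_iff)
  qed
  show "cp_columns A (set_mset M)"
    unfolding xs[symmetric] set_mset_mset cp_columns_def
  proof (intro conjI ballI allI impI)
    fix c d assume "c \<in> set xs" "d \<in> set xs" "c \<noteq> d"
    then have "{#c, d#} \<subseteq># M" using xs dist by (auto simp: subseteq_mset_def)
    then show "\<not> lin_dep_pair c d" using assms(2) by blast
  next
    fix i i'
    have "A $ i $ i' = (\<Sum>e\<in>#M. e i * e i')" using assms(1) by (simp add: cp_column_mset_def)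
    also have "\<dots> = sum_list (map (\<lambda>e. e i * e i') xs)"
      by (simp only: xs[symmetric] mset_map[symmetric] sum_mset_sum_list)
    finally show "A $ i $ i' = (\<Sum>e\<in>set xs. e i * e i')"
      using dist by (simp add: sum_list_distinct_conv_sum_set)
  qed (use assms(1) xs in \<open>auto simp: cp_column_mset_def\<close>)
  show "card (set_mset M) = size M" using dist xs[symmetric] by (simp add: distinct_card)
qed

lemma cp_columns_of_mset:
  assumes "cp_column_mset A M"
  shows "\<exists>S. cp_columns A S \<and> card S \<le> size M"
  using assms
proof (induction "size M" arbitrary: M rule: less_induct)
  case less
  show ?case
  proof (cases "\<exists>c d. {#c, d#} \<subseteq># M \<and> lin_dep_pair c d")
    case True
    then obtain c d where cd: "{#c, d#} \<subseteq># M" "lin_dep_pair c d" by blast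
    then have "c \<in># M" "d \<in># M" by (auto dest: mset_subset_eqD)
    then obtain w where w: "\<forall>i. 0 \<le> w i" "\<forall>i i'. w i * w i' = c i * c i' + d i * d i'"
      using merge_dependent_columns[OF _ _ cd(2)] less.prems unfolding cp_column_mset_def by blast
    define R where "R = M - {#c, d#}"
    have MR: "M = R + {#c, d#}" using subset_mset.diff_add[OF cd(1)] by (simp add: R_def)
    have smaller: "size (add_mset w R) < size M" by (simp add: MR)
    have "cp_column_mset A (add_mset w R)"
      unfolding cp_column_mset_def
    proof (intro conjI ballI allI)
      fix e i assume "e \<in># add_mset w R"
      then show "0 \<le> e i" using w(1) less.prems by (auto simp: cp_column_mset_def MR)
    next
      fix i i'
      show "A $ i $ i' = (\<Sum>e\<in>#add_mset w R. e i * e i')"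
        using less.prems w(2) by (simp add: cp_column_mset_def MR add.assoc)
    qed
    then show ?thesis using less.hyps[OF smaller] smaller by force
  next
    case False
    then have "\<forall>c d. {#c, d#} \<subseteq># M \<longrightarrow> \<not> lin_dep_pair c d" by blast
    from cp_columns_of_mset_without_dependent_pairs[OF less.prems this]
    show ?thesis by (intro exI[of _ "set_mset M"]) simp
  qed
qed

lemma cp_rank_le_card:
  assumes "cp_columns A S"
  shows "cp_rank A \<le> card S"
proof -
  obtain B where "cp_factorization A (card S) B"
    using cp_factorization_of_columns[OF assms] by blast
  then show ?thesis unfolding cp_rank_def cp_factorization_def by (intro Least_le) blast
qed

lemma minimal_cp_columns_exists:
  assumes "completely_positive A"
  obtains S where "cp_columns A S" and "card S = cp_rank A"
proof -
  obtain B where B: "nonneg_factor A (cp_rank A) B"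
    using LeastI_ex[of "\<lambda>k. Ex (nonneg_factor A k)"] assms
    unfolding completely_positive_def cp_rank_def by blast
  have "cp_column_mset A (mset (factor_columns (cp_rank A) B))"
    using B nonneg_factor_columns_sum[OF B]
    by (auto simp: cp_column_mset_def set_factor_columns nonneg_factor_def sum_mset_sum_list
        simp flip: mset_map)
  then obtain S where "cp_columns A S" "card S \<le> cp_rank A"
    using cp_columns_of_mset by fastforce
  then show ?thesis using that cp_rank_le_card[of A S] by simp
qed

lemma unique_cp_factorization_iff_columns:
  "unique_cp_factorization A \<longleftrightarrow>
     (\<exists>S. cp_columns A S) \<and> (\<forall>S T. cp_columns A S \<longrightarrow> cp_columns A T \<longrightarrow> S = T)"
proof
  assume u: "unique_cp_factorization A"
  then obtain k B where "cp_factorization A k B" unfolding unique_cp_factorization_def by blast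
  then have "\<exists>S. cp_columns A S" using cp_factorization_columns(2) by blast
  moreover have "S = T" if S: "cp_columns A S" and T: "cp_columns A T" for S T
  proof -
    obtain B where B: "cp_factorization A (card S) B" "set (factor_columns (card S) B) = S"
      using cp_factorization_of_columns[OF S] .
    obtain C where C: "cp_factorization A (card T) C" "set (factor_columns (card T) C) = T"
      using cp_factorization_of_columns[OF T] .
    show ?thesis
      using u B C same_factorization_iff_columns[OF B(1) C(1)]
      unfolding unique_cp_factorization_def by blast
  qed
  ultimately show "(\<exists>S. cp_columns A S) \<and> (\<forall>S T. cp_columns A S \<longrightarrow> cp_columns A T \<longrightarrow> S = T)"
    by blast
next
  assume r: "(\<exists>S. cp_columns A S) \<and> (\<forall>S T. cp_columns A S \<longrightarrow> cp_columns A T \<longrightarrow> S = T)"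
  then obtain S where "cp_columns A S" by blast
  then have "\<exists>k B. cp_factorization A k B" using cp_factorization_of_columns by metis
  moreover have "same_factorization k B k' C"
    if B: "cp_factorization A k B" and C: "cp_factorization A k' C" for k B k' C
    using r cp_factorization_columns(2)[OF B] cp_factorization_columns(2)[OF C]
      same_factorization_iff_columns[OF B C] by blast
  ultimately show "unique_cp_factorization A" unfolding unique_cp_factorization_def by blast
qed

lemma unique_minimal_cp_factorization_iff_columns:
  "unique_minimal_cp_factorization A \<longleftrightarrow> (\<exists>S. cp_columns A S \<and> card S = cp_rank A) \<and>
     (\<forall>S T. cp_columns A S \<longrightarrow> card S = cp_rank A \<longrightarrow> cp_columns A T \<longrightarrow> card T = cp_rank A
        \<longrightarrow> S = T)"
proof
  assume u: "unique_minimal_cp_factorization A"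
  then obtain k B where "cp_factorization A k B" "k = cp_rank A"
    unfolding unique_minimal_cp_factorization_def minimal_cp_factorization_def by blast
  then have "\<exists>S. cp_columns A S \<and> card S = cp_rank A"
    using cp_factorization_columns(2) card_factor_columns_cp_factorization by blast
  moreover have "S = T"
    if S: "cp_columns A S" "card S = cp_rank A" and T: "cp_columns A T" "card T = cp_rank A" for S T
  proof -
    obtain B where B: "cp_factorization A (card S) B" "set (factor_columns (card S) B) = S"
      using cp_factorization_of_columns[OF S(1)] .
    obtain C where C: "cp_factorization A (card T) C" "set (factor_columns (card T) C) = T"
      using cp_factorization_of_columns[OF T(1)] .
    show ?thesis
      using u B C S(2) T(2) same_factorization_iff_columns[OF B(1) C(1)]
      unfolding unique_minimal_cp_factorization_def minimal_cp_factorization_def by blast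
  qed
  ultimately show "(\<exists>S. cp_columns A S \<and> card S = cp_rank A) \<and>
     (\<forall>S T. cp_columns A S \<longrightarrow> card S = cp_rank A \<longrightarrow> cp_columns A T \<longrightarrow> card T = cp_rank A
        \<longrightarrow> S = T)"
    by blast
next
  assume r: "(\<exists>S. cp_columns A S \<and> card S = cp_rank A) \<and>
     (\<forall>S T. cp_columns A S \<longrightarrow> card S = cp_rank A \<longrightarrow> cp_columns A T \<longrightarrow> card T = cp_rank A
        \<longrightarrow> S = T)"
  then obtain S where "cp_columns A S" "card S = cp_rank A" by blast
  then have "\<exists>k B. cp_factorization A k B \<and> k = cp_rank A"
    using cp_factorization_of_columns by metis
  moreover have "same_factorization k B k' C"
    if B: "cp_factorization A k B" "k = cp_rank A" and C: "cp_factorization A k' C" "k' = cp_rank A"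
    for k B k' C
    using r B C cp_factorization_columns(2)[OF B(1)] cp_factorization_columns(2)[OF C(1)]
      card_factor_columns_cp_factorization[OF B(1)] card_factor_columns_cp_factorization[OF C(1)]
      same_factorization_iff_columns[OF B(1) C(1)] by metis
  ultimately show "unique_minimal_cp_factorization A"
    unfolding unique_minimal_cp_factorization_def minimal_cp_factorization_def by blast
qed

lemma cp_columns_exchange:
  assumes S: "cp_columns A S" and C: "C \<subseteq> S" and N: "finite N" "(S - C) \<inter> N = {}"
    and card: "card N = card C"
    and nonneg: "\<forall>e\<in>N. \<forall>i. 0 \<le> e i"
    and gram: "\<forall>i i'. (\<Sum>e\<in>N. e i * e i') = (\<Sum>e\<in>C. e i * e i')"
    and indep: "pairwise (\<lambda>e f. \<not> lin_dep_pair e f) ((S - C) \<union> N)"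
  shows "cp_columns A ((S - C) \<union> N)" and "card ((S - C) \<union> N) = card S"
proof -
  have fin: "finite S" using S by (simp add: cp_columns_def)
  have "A $ i $ i' = (\<Sum>e\<in>(S - C) \<union> N. e i * e i')" for i i'
  proof -
    have "A $ i $ i' = (\<Sum>e\<in>S - C. e i * e i') + (\<Sum>e\<in>C. e i * e i')"
      using S sum.subset_diff[OF C fin] by (simp add: cp_columns_def)
    also have "\<dots> = (\<Sum>e\<in>(S - C) \<union> N. e i * e i')"
      using gram fin N by (simp add: sum.union_disjoint)
    finally show ?thesis .
  qed
  then show "cp_columns A ((S - C) \<union> N)"
    using S fin N nonneg indep by (auto simp: cp_columns_def pairwise_def)
  have "card ((S - C) \<union> N) = card (S - C) + card C"
    using fin N card by (simp add: card_Un_disjoint)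
  also have "\<dots> = card S" using C fin by (metis card_Diff_subset card_mono finite_subset le_add_diff_inverse2)
  finally show "card ((S - C) \<union> N) = card S" .
qed

section \<open>Linear dependence and rotation of two columns\<close>

definition pair_minor :: "('n \<Rightarrow> real) \<Rightarrow> ('n \<Rightarrow> real) \<Rightarrow> 'n \<Rightarrow> 'n \<Rightarrow> real" where
  "pair_minor u w i j = u i * w j - u j * w i"

lemma lin_dep_pair_iff_minors: "lin_dep_pair u w \<longleftrightarrow> (\<forall>i j. pair_minor u w i j = 0)"
proof
  assume "lin_dep_pair u w"
  then obtain a b where ab: "a \<noteq> 0 \<or> b \<noteq> 0" "\<forall>i. a * u i + b * w i = 0"
    unfolding lin_dep_pair_def by blast
  show "\<forall>i j. pair_minor u w i j = 0"
  proof (cases "b = 0")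
    case True
    then show ?thesis using ab by (simp add: pair_minor_def)
  next
    case False
    then have "w i = - (a / b) * u i" for i
      using ab(2)[rule_format, of i] by (simp add: field_simps)
    then show ?thesis by (simp add: pair_minor_def)
  qed
next
  assume minors: "\<forall>i j. pair_minor u w i j = 0"
  show "lin_dep_pair u w"
  proof (cases "\<forall>i. u i = 0")
    case True
    then show ?thesis unfolding lin_dep_pair_def by (intro exI[of _ 1] exI[of _ 0]) simp
  next
    case False
    then obtain k where k: "u k \<noteq> 0" by blast
    have "w k * u i + - u k * w i = 0" for i
      using minors[rule_format, of i k] by (simp add: pair_minor_def algebra_simps)
    then show ?thesis unfolding lin_dep_pair_def using k by (intro exI[of _ "w k"] exI[of _ "- u k"]) simp
  qed
qed

lemma lin_dep_pair_sym: "lin_dep_pair u w \<longleftrightarrow> lin_dep_pair w u"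
proof -
  have "pair_minor w u i j = pair_minor u w j i" for i j by (simp add: pair_minor_def mult.commute)
  then show ?thesis unfolding lin_dep_pair_iff_minors by metis
qed

lemma lin_dep_pair_uminus_right: "lin_dep_pair u (\<lambda>i. - w i) \<longleftrightarrow> lin_dep_pair u w"
proof -
  have "pair_minor u (\<lambda>i. - w i) i j = - pair_minor u w i j" for i j
    by (simp add: pair_minor_def)
  then show ?thesis unfolding lin_dep_pair_iff_minors by simp
qed

lemma not_lin_dep_pair_if_minor: "pair_minor u w i j \<noteq> 0 \<Longrightarrow> \<not> lin_dep_pair u w"
  by (auto simp: lin_dep_pair_iff_minors)

lemma not_lin_dep_pair_if_supports_differ:
  assumes "\<forall>i. 0 \<le> u i" "\<forall>i. 0 \<le> v i" "u k > 0" "v k' > 0" "(u l > 0) \<noteq> (v l > 0)"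
  shows "\<not> lin_dep_pair u v"
proof
  assume "lin_dep_pair u v"
  then obtain a b where ab: "a \<noteq> 0 \<or> b \<noteq> 0" "\<forall>i. a * u i + b * v i = 0"
    unfolding lin_dep_pair_def by blast
  have "a \<noteq> 0" using ab assms(4) by (metis add_0 mult_eq_0_iff mult_zero_left less_irrefl)
  define \<mu> where "\<mu> = - b / a"
  have u: "u i = \<mu> * v i" for i
    using ab(2)[rule_format, of i] \<open>a \<noteq> 0\<close> by (simp add: \<mu>_def field_simps)
  have "0 < \<mu>"
  proof (rule ccontr)
    assume "\<not> 0 < \<mu>"
    then have "u k \<le> 0" using u[of k] assms(2) mult_nonpos_nonneg by (metis not_less)
    then show False using assms(3) by simp
  qed
  then show False using u[of l] assms(5) by (simp add: zero_less_mult_iff)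
qed

definition rotate_pair :: "real \<Rightarrow> ('n \<Rightarrow> real) \<Rightarrow> ('n \<Rightarrow> real) \<Rightarrow> 'n \<Rightarrow> real" where
  "rotate_pair \<theta> u v i = cos \<theta> * u i + sin \<theta> * v i"

lemma rotate_pair_outer_sum:
  "rotate_pair \<theta> c d i * rotate_pair \<theta> c d i' +
     rotate_pair \<theta> d (\<lambda>i. - c i) i * rotate_pair \<theta> d (\<lambda>i. - c i) i' = c i * c i' + d i * d i'"
proof -
  have "(ca * c i + sa * d i) * (ca * c i' + sa * d i') + (ca * d i + sa * - c i) * (ca * d i' + sa * - c i')
      = (ca\<^sup>2 + sa\<^sup>2) * (c i * c i' + d i * d i')" for ca sa :: real
    by (simp add: algebra_simps power2_eq_square)
  from this[of "cos \<theta>" "sin \<theta>"] show ?thesis by (simp add: rotate_pair_def)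
qed

lemma pair_minor_rotate_pairs:
  "pair_minor (rotate_pair \<theta> c d) (rotate_pair \<theta> d (\<lambda>i. - c i)) i j = pair_minor c d i j"
proof -
  have "(ca * c i + sa * d i) * (ca * d j + sa * - c j) - (ca * c j + sa * d j) * (ca * d i + sa * - c i)
      = (ca\<^sup>2 + sa\<^sup>2) * (c i * d j - c j * d i)" for ca sa :: real
    by (simp add: algebra_simps power2_eq_square)
  from this[of "cos \<theta>" "sin \<theta>"] show ?thesis by (simp add: rotate_pair_def pair_minor_def)
qed

lemma not_lin_dep_rotate_pair:
  assumes "\<not> lin_dep_pair u v"
  shows "cos \<theta> \<noteq> 0 \<Longrightarrow> \<not> lin_dep_pair (rotate_pair \<theta> u v) v"
    and "sin \<theta> \<noteq> 0 \<Longrightarrow> \<not> lin_dep_pair (rotate_pair \<theta> u v) u"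
proof -
  obtain i j where ij: "pair_minor u v i j \<noteq> 0" using assms lin_dep_pair_iff_minors by blast
  have "pair_minor (rotate_pair \<theta> u v) v i j = cos \<theta> * pair_minor u v i j"
    and "pair_minor (rotate_pair \<theta> u v) u i j = - sin \<theta> * pair_minor u v i j"
    by (simp_all add: pair_minor_def rotate_pair_def algebra_simps)
  then show "cos \<theta> \<noteq> 0 \<Longrightarrow> \<not> lin_dep_pair (rotate_pair \<theta> u v) v"
    and "sin \<theta> \<noteq> 0 \<Longrightarrow> \<not> lin_dep_pair (rotate_pair \<theta> u v) u"
    using ij not_lin_dep_pair_if_minor[of "rotate_pair \<theta> u v" _ i j] by simp_all
qed

lemma tendsto_rotate_pair: "((\<lambda>\<theta>. rotate_pair \<theta> u v i) \<longlongrightarrow> u i) (at_right 0)"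
proof -
  have "((\<lambda>\<theta>. cos \<theta> * u i + sin \<theta> * v i) \<longlongrightarrow> cos 0 * u i + sin 0 * v i) (at_right 0)"
    by (intro tendsto_intros)
  then show ?thesis by (simp add: rotate_pair_def)
qed

lemma eventually_not_lin_dep_rotate_pair:
  assumes "\<not> lin_dep_pair u e"
  shows "eventually (\<lambda>\<theta>. \<not> lin_dep_pair (rotate_pair \<theta> u v) e) (at_right 0)"
proof -
  obtain i j where "pair_minor u e i j \<noteq> 0" using assms lin_dep_pair_iff_minors by blast
  moreover have "((\<lambda>\<theta>. pair_minor (rotate_pair \<theta> u v) e i j) \<longlongrightarrow> pair_minor u e i j) (at_right 0)"
    unfolding pair_minor_def by (intro tendsto_intros tendsto_rotate_pair)
  ultimately have "eventually (\<lambda>\<theta>. pair_minor (rotate_pair \<theta> u v) e i j \<noteq> 0) (at_right 0)"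
    using tendsto_imp_eventually_ne by blast
  then show ?thesis by (rule eventually_mono) (auto simp: lin_dep_pair_iff_minors)
qed

lemma eventually_rotate_pair_nonneg:
  fixes c d :: "'n::finite \<Rightarrow> real"
  assumes "\<forall>i. 0 \<le> c i" "\<forall>i. 0 \<le> d i" and "\<forall>i. 0 < c i \<longrightarrow> 0 < d i"
  shows "eventually (\<lambda>\<theta>. \<forall>i. 0 \<le> rotate_pair \<theta> d (\<lambda>i. - c i) i) (at_right 0)"
proof -
  have "eventually (\<lambda>\<theta>. 0 \<le> rotate_pair \<theta> d (\<lambda>i. - c i) i) (at_right 0)" for i
  proof (cases "d i > 0")
    case True
    then show ?thesis
      using order_tendstoD(1)[OF tendsto_rotate_pair[of d "\<lambda>i. - c i" i] True]
      by (auto elim: eventually_mono)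
  next
    case False
    then have "d i = 0" "c i = 0" using assms by (metis less_le)+
    then show ?thesis by (simp add: rotate_pair_def)
  qed
  then show ?thesis by (simp add: eventually_all_finite)
qed

lemma exists_small_rotation:
  fixes c d :: "'n::finite \<Rightarrow> real"
  assumes "finite R" "\<forall>e\<in>R. \<not> lin_dep_pair c e \<and> \<not> lin_dep_pair d e"
    and "\<forall>i. 0 \<le> c i" "\<forall>i. 0 \<le> d i" "\<forall>i. 0 < c i \<longrightarrow> 0 < d i"
  obtains \<theta> where "0 < \<theta>" "\<theta> < pi / 2" "\<forall>i. 0 \<le> rotate_pair \<theta> d (\<lambda>i. - c i) i"
    "\<forall>e\<in>R. \<not> lin_dep_pair (rotate_pair \<theta> c d) e \<and> \<not> lin_dep_pair (rotate_pair \<theta> d (\<lambda>i. - c i)) e"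
proof -
  have "eventually (\<lambda>\<theta>. \<forall>e\<in>R. \<not> lin_dep_pair (rotate_pair \<theta> c d) e \<and>
      \<not> lin_dep_pair (rotate_pair \<theta> d (\<lambda>i. - c i)) e) (at_right 0)"
    using assms(1,2)
    by (intro eventually_ball_finite ballI eventually_conj eventually_not_lin_dep_rotate_pair) auto
  moreover have "eventually (\<lambda>\<theta>::real. 0 < \<theta> \<and> \<theta> < pi / 2) (at_right 0)"
  proof -
    have "eventually (\<lambda>\<theta>::real. \<theta> < pi / 2) (at_right 0)"
      using order_tendstoD(2)[OF tendsto_ident_at[of 0 "{0<..}"], of "pi / 2"] by simp
    then show ?thesis using eventually_at_right_less[of 0] by eventually_elim auto
  qed
  moreover have "eventually (\<lambda>\<theta>. \<forall>i. 0 \<le> rotate_pair \<theta> d (\<lambda>i. - c i) i) (at_right 0)"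
    using eventually_rotate_pair_nonneg assms(3-5) by blast
  ultimately have "eventually (\<lambda>\<theta>. 0 < \<theta> \<and> \<theta> < pi / 2 \<and> (\<forall>i. 0 \<le> rotate_pair \<theta> d (\<lambda>i. - c i) i) \<and>
      (\<forall>e\<in>R. \<not> lin_dep_pair (rotate_pair \<theta> c d) e \<and>
        \<not> lin_dep_pair (rotate_pair \<theta> d (\<lambda>i. - c i)) e)) (at_right 0)"
    by eventually_elim auto
  then show ?thesis using that eventually_happens'[OF trivial_limit_at_right_real] by blast
qed

text \<open>If the support of one column lies inside that of another, rotating the two columns
  by a small angle preserves nonnegativity and their contribution to \<open>A\<close>.\<close>

lemma cp_columns_rotate:
  fixes S :: "('n::finite \<Rightarrow> real) set"
  assumes S: "cp_columns A S" and cd: "c \<in> S" "d \<in> S" "c \<noteq> d"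
    and supp: "\<forall>i. 0 < c i \<longrightarrow> 0 < d i"
  obtains T where "cp_columns A T" and "card T = card S" and "T \<noteq> S"
proof -
  define R where "R = S - {c, d}"
  have fin: "finite R" and nn: "\<forall>e\<in>S. \<forall>i. 0 \<le> e i"
    and indep: "\<forall>e\<in>S. \<forall>f\<in>S. e \<noteq> f \<longrightarrow> \<not> lin_dep_pair e f"
    using S by (auto simp: cp_columns_def R_def)
  have "\<forall>e\<in>R. \<not> lin_dep_pair c e \<and> \<not> lin_dep_pair d e" using indep cd by (auto simp: R_def)
  then obtain \<theta> where \<theta>: "0 < \<theta>" "\<theta> < pi / 2" "\<forall>i. 0 \<le> rotate_pair \<theta> d (\<lambda>i. - c i) i"
    "\<forall>e\<in>R. \<not> lin_dep_pair (rotate_pair \<theta> c d) e \<and> \<not> lin_dep_pair (rotate_pair \<theta> d (\<lambda>i. - c i)) e"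
    using exists_small_rotation[OF fin] nn cd supp by metis
  define c' where "c' = rotate_pair \<theta> c d"
  define d' where "d' = rotate_pair \<theta> d (\<lambda>i. - c i)"
  have cos: "cos \<theta> > 0" and sin: "sin \<theta> > 0" using \<theta>(1,2) by (auto intro: cos_gt_zero sin_gt_zero)
  have cd_indep: "\<not> lin_dep_pair c d" and dc_indep: "\<not> lin_dep_pair d (\<lambda>i. - c i)"
    using indep cd lin_dep_pair_sym lin_dep_pair_uminus_right by metis+
  have c'd': "\<not> lin_dep_pair c' d'"
    using cd_indep by (simp add: c'_def d'_def lin_dep_pair_iff_minors pair_minor_rotate_pairs)
  have "\<not> lin_dep_pair c' c" "\<not> lin_dep_pair c' d" "\<not> lin_dep_pair d' d"
    using not_lin_dep_rotate_pair[OF cd_indep] not_lin_dep_rotate_pair[OF dc_indep] cos sin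
    unfolding c'_def d'_def by auto
  moreover have "\<not> lin_dep_pair d' c"
    using not_lin_dep_rotate_pair(1)[OF dc_indep, of \<theta>] cos lin_dep_pair_uminus_right[of d' c]
    unfolding d'_def by simp
  ultimately have "c' \<notin> {c, d}" "d' \<notin> {c, d}" using lin_dep_pair_refl by auto
  moreover have "c' \<notin> R" "d' \<notin> R"
    using \<theta>(4) lin_dep_pair_refl unfolding c'_def d'_def by blast+
  ultimately have new: "c' \<notin> S" "d' \<notin> S" "c' \<noteq> d'"
    using c'd' lin_dep_pair_refl unfolding R_def by blast+
  have nonneg: "\<forall>e\<in>{c', d'}. \<forall>i. 0 \<le> e i"
    using \<theta>(3) nn cd cos sin by (auto simp: c'_def d'_def rotate_pair_def)
  have gram: "\<forall>i i'. (\<Sum>e\<in>{c', d'}. e i * e i') = (\<Sum>e\<in>{c, d}. e i * e i')"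
    using new(3) cd(3) rotate_pair_outer_sum[of \<theta> c d] unfolding c'_def d'_def by simp
  have "\<forall>e\<in>R. \<not> lin_dep_pair c' e \<and> \<not> lin_dep_pair e c' \<and> \<not> lin_dep_pair d' e \<and> \<not> lin_dep_pair e d'"
    using \<theta>(4) lin_dep_pair_sym unfolding c'_def d'_def by metis
  moreover have "\<not> lin_dep_pair d' c'" using c'd' lin_dep_pair_sym by metis
  ultimately have "pairwise (\<lambda>e f. \<not> lin_dep_pair e f) (insert c' (insert d' R))"
    using indep c'd' by (auto simp: pairwise_insert pairwise_def R_def)
  then have pw: "pairwise (\<lambda>e f. \<not> lin_dep_pair e f) ((S - {c, d}) \<union> {c', d'})"
    by (simp add: R_def insert_commute)
  have "(S - {c, d}) \<inter> {c', d'} = {}" "card {c', d'} = card {c, d}"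
    using new cd(3) by auto
  with cp_columns_exchange[OF S _ _ _ _ nonneg gram pw] cd new
  show ?thesis by (intro that[of "(S - {c, d}) \<union> {c', d'}"]) auto
qed

section \<open>Columns of a matrix with a triangle-free graph\<close>

locale triangle_free_cp =
  fixes A :: "real^'n^'n"
  assumes card_ge_2: "CARD('n) \<ge> 2"
    and irreducible: "irreducible_mat A"
    and triangle_free: "triangle_free_graph A"
begin

lemma exists_other_vertex: "\<exists>j::'n. j \<noteq> i"
proof (rule ccontr)
  assume "\<not> (\<exists>j::'n. j \<noteq> i)"
  then have "(UNIV :: 'n set) = {i}" by auto
  then have "CARD('n) = card {i}" by (rule arg_cong)
  then show False using card_ge_2 by simp
qed

lemma exists_edge: "\<exists>j. graph_edge A i j"
proof -
  obtain j where "j \<noteq> i" using exists_other_vertex by blast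
  have "(graph_edge A)\<^sup>*\<^sup>* i j" using irreducible by (simp add: irreducible_mat_def)
  then show ?thesis using \<open>j \<noteq> i\<close> by (cases rule: converse_rtranclpE) auto
qed

end

locale triangle_free_cp_columns = triangle_free_cp A for A :: "real^'n^'n" +
  fixes S :: "('n \<Rightarrow> real) set"
  assumes cp_columns: "cp_columns A S"
begin

lemma finite_columns: "finite S"
  and column_nonneg: "c \<in> S \<Longrightarrow> 0 \<le> c i"
  and columns_indep: "c \<in> S \<Longrightarrow> d \<in> S \<Longrightarrow> c \<noteq> d \<Longrightarrow> \<not> lin_dep_pair c d"
  and entry_eq_sum: "A $ i $ i' = (\<Sum>c\<in>S. c i * c i')"
  using cp_columns by (auto simp: cp_columns_def)

lemma entry_nonneg: "0 \<le> A $ i $ j"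
  unfolding entry_eq_sum by (intro sum_nonneg) (simp add: column_nonneg)

lemma entry_sym: "A $ i $ j = A $ j $ i"
  unfolding entry_eq_sum by (simp add: mult.commute)

lemma graph_edge_sym: "graph_edge A i j \<Longrightarrow> graph_edge A j i"
  using entry_sym by (auto simp: graph_edge_def)

lemma column_prod_le_entry: "c \<in> S \<Longrightarrow> c i * c j \<le> A $ i $ j"
  unfolding entry_eq_sum by (rule member_le_sum) (auto simp: column_nonneg finite_columns)

lemma graph_edge_if_column_pos:
  assumes "c \<in> S" "i \<noteq> j" "c i > 0" "c j > 0"
  shows "graph_edge A i j"
proof -
  have "0 < c i * c j" using assms by simp
  then have "0 < A $ i $ j" using column_prod_le_entry[OF assms(1), of i j] by linarith
  then show ?thesis using assms unfolding graph_edge_def by simp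
qed

text \<open>This is where triangle-freeness enters: a column is supported on at most two vertices.\<close>

lemma column_zero_off_edge:
  assumes "c \<in> S" "i \<noteq> j" "c i > 0" "c j > 0" "l \<noteq> i" "l \<noteq> j"
  shows "c l = 0"
proof (rule ccontr)
  assume "c l \<noteq> 0"
  then have "c l > 0" using column_nonneg[OF assms(1), of l] by simp
  then have "graph_edge A i j" "graph_edge A j l" "graph_edge A i l"
    using graph_edge_if_column_pos assms by auto
  then show False using triangle_free unfolding triangle_free_graph_def by blast
qed

lemma column_pos_at_edge:
  assumes "graph_edge A i j"
  obtains c where "c \<in> S" "c i > 0" "c j > 0"
proof -
  have "(\<Sum>c\<in>S. c i * c j) \<noteq> 0" using assms entry_eq_sum unfolding graph_edge_def by simp
  then obtain c where "c \<in> S" "c i * c j \<noteq> 0" by (rule sum.not_neutral_contains_not_neutral)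
  then show ?thesis
    using that column_nonneg[of c i] column_nonneg[of c j] by (simp add: less_le)
qed

lemma column_nonzero:
  assumes "c \<in> S"
  obtains i where "c i > 0"
proof (rule ccontr)
  assume "\<not> thesis"
  then have "\<not> c i > 0" for i using that by blast
  then have c0: "c i = 0" for i using column_nonneg[OF assms, of i] by (meson antisym not_le)
  obtain i j :: 'n where "graph_edge A i j" using exists_edge by blast
  then obtain d where d: "d \<in> S" "d i > 0" by (rule column_pos_at_edge)
  then have "d \<noteq> c" using c0 by auto
  moreover have "lin_dep_pair c d" unfolding lin_dep_pair_def using c0 by (intro exI[of _ 1] exI[of _ 0]) simp
  ultimately show False using columns_indep[OF assms d(1)] by simp
qed

lemma column_support_pair:
  assumes "c \<in> S"
  obtains p q where "p \<noteq> q" "c p > 0" "\<forall>l. l \<noteq> p \<and> l \<noteq> q \<longrightarrow> c l = 0"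
proof -
  obtain p where p: "c p > 0" using column_nonzero[OF assms] by blast
  show ?thesis
  proof (cases "\<exists>q. q \<noteq> p \<and> c q > 0")
    case True
    then obtain q where q: "q \<noteq> p" "c q > 0" by blast
    then have "\<forall>l. l \<noteq> p \<and> l \<noteq> q \<longrightarrow> c l = 0"
      using column_zero_off_edge[OF assms _ p q(2)] by auto
    then show ?thesis using that p q by blast
  next
    case False
    obtain q where "q \<noteq> p" using exists_other_vertex by blast
    then show ?thesis using that[of p q] p False column_nonneg[OF assms] by (force simp: less_le)
  qed
qed

end

section \<open>A singular comparison matrix forces the columns\<close>

definition comparison_mv :: "real^'n^'n \<Rightarrow> ('n \<Rightarrow> real) \<Rightarrow> 'n \<Rightarrow> real" where
  "comparison_mv A y i = 2 * A $ i $ i * y i - (\<Sum>j\<in>UNIV. A $ i $ j * y j)"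

definition column_form :: "('n::finite \<Rightarrow> real) \<Rightarrow> ('n \<Rightarrow> real) \<Rightarrow> real" where
  "column_form c y = 2 * (\<Sum>i\<in>UNIV. (c i)\<^sup>2 * (y i)\<^sup>2) - (\<Sum>i\<in>UNIV. c i * y i)\<^sup>2"

definition kernel_column :: "real^'n^'n \<Rightarrow> ('n \<Rightarrow> real) \<Rightarrow> 'n \<Rightarrow> 'n \<Rightarrow> 'n \<Rightarrow> real" where
  "kernel_column A z p q l =
     (if l = p then sqrt (A $ p $ q * z q / z p) else if l = q then sqrt (A $ p $ q * z p / z q) else 0)"

lemma sum_UNIV_two_points:
  fixes g :: "'n::finite \<Rightarrow> real"
  assumes "p \<noteq> q" "\<forall>l. l \<noteq> p \<and> l \<noteq> q \<longrightarrow> g l = 0"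
  shows "(\<Sum>l\<in>UNIV. g l) = g p + g q"
proof -
  have "(\<Sum>l\<in>UNIV. g l) = (\<Sum>l\<in>{p, q}. g l)"
    using assms(2) by (intro sum.mono_neutral_right) auto
  then show ?thesis using assms(1) by simp
qed

lemma column_form_two_points:
  fixes c :: "'n::finite \<Rightarrow> real"
  assumes "p \<noteq> q" "\<forall>l. l \<noteq> p \<and> l \<noteq> q \<longrightarrow> c l = 0"
  shows "column_form c y = (c p * y p - c q * y q)\<^sup>2"
proof -
  have "(\<Sum>i\<in>UNIV. (c i)\<^sup>2 * (y i)\<^sup>2) = (c p)\<^sup>2 * (y p)\<^sup>2 + (c q)\<^sup>2 * (y q)\<^sup>2"
    and "(\<Sum>i\<in>UNIV. c i * y i) = c p * y p + c q * y q"
    by (rule sum_UNIV_two_points[OF assms(1)], use assms(2) in simp)+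
  then show ?thesis unfolding column_form_def by (simp add: power2_eq_square algebra_simps)
qed

context triangle_free_cp_columns
begin

lemma comparison_matrix_mult: "(comparison_matrix A *v y) $ i = comparison_mv A (\<lambda>j. y $ j) i"
proof -
  have "(comparison_matrix A *v y) $ i = (\<Sum>j\<in>UNIV. (if i = j then A $ i $ i else - A $ i $ j) * y $ j)"
    unfolding matrix_vector_mult_def comparison_matrix_def
    by (simp only: abs_of_nonneg[OF entry_nonneg]) simp
  also have "\<dots> = (\<Sum>j\<in>UNIV. (if i = j then 2 * A $ i $ i * y $ j else 0) - A $ i $ j * y $ j)"
    by (intro sum.cong) auto
  finally show ?thesis by (simp add: comparison_mv_def sum_subtractf)
qed

text \<open>Each column contributes a square to the quadratic form of \<open>M(A)\<close>.\<close>

lemma comparison_form_eq_sum_column_form: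
  "(\<Sum>i\<in>UNIV. y i * comparison_mv A y i) = (\<Sum>c\<in>S. column_form c y)"
proof -
  have "(\<Sum>i\<in>UNIV. y i * comparison_mv A y i) =
      (\<Sum>i\<in>UNIV. 2 * (A $ i $ i * (y i)\<^sup>2)) - (\<Sum>i\<in>UNIV. \<Sum>j\<in>UNIV. y i * A $ i $ j * y j)"
    by (simp add: comparison_mv_def sum_subtractf right_diff_distrib sum_distrib_left
        power2_eq_square algebra_simps)
  also have "(\<Sum>i\<in>UNIV. 2 * (A $ i $ i * (y i)\<^sup>2)) = (\<Sum>c\<in>S. 2 * (\<Sum>i\<in>UNIV. (c i)\<^sup>2 * (y i)\<^sup>2))"
    unfolding entry_eq_sum
    by (simp add: sum_distrib_left sum_distrib_right power2_eq_square algebra_simps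
        sum.swap[of _ UNIV])
  also have "(\<Sum>i\<in>UNIV. \<Sum>j\<in>UNIV. y i * A $ i $ j * y j) = (\<Sum>c\<in>S. (\<Sum>i\<in>UNIV. c i * y i)\<^sup>2)"
  proof -
    have "(\<Sum>i\<in>UNIV. \<Sum>j\<in>UNIV. y i * A $ i $ j * y j) =
        (\<Sum>i\<in>UNIV. \<Sum>j\<in>UNIV. \<Sum>c\<in>S. (c i * y i) * (c j * y j))"
      unfolding entry_eq_sum by (simp add: sum_distrib_left sum_distrib_right algebra_simps)
    also have "\<dots> = (\<Sum>c\<in>S. \<Sum>i\<in>UNIV. \<Sum>j\<in>UNIV. (c i * y i) * (c j * y j))"
      by (simp add: sum.swap[of _ S])
    also have "\<dots> = (\<Sum>c\<in>S. (\<Sum>i\<in>UNIV. c i * y i)\<^sup>2)"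
      by (simp add: power2_eq_square sum_product)
    finally show ?thesis .
  qed
  finally show ?thesis by (simp add: column_form_def sum_subtractf)
qed

lemma column_form_nonneg: "c \<in> S \<Longrightarrow> 0 \<le> column_form c y"
  by (metis column_support_pair column_form_two_points zero_le_power2)

lemma column_form_kernel:
  assumes "\<forall>i. comparison_mv A y i = 0" "c \<in> S"
  shows "column_form c y = 0"
proof -
  have "(\<Sum>c\<in>S. column_form c y) = 0"
    using comparison_form_eq_sum_column_form[of y] assms(1) by simp
  then show ?thesis
    using assms(2) column_form_nonneg by (simp add: sum_nonneg_eq_0_iff[OF finite_columns])
qed

lemma kernel_balanced_on_column:
  assumes "\<forall>i. comparison_mv A y i = 0" "c \<in> S" "i \<noteq> j" "c i > 0" "c j > 0"
  shows "c i * y i = c j * y j"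
proof -
  have "column_form c y = (c i * y i - c j * y j)\<^sup>2"
    using column_zero_off_edge[OF assms(2-5)] by (intro column_form_two_points[OF assms(3)]) simp
  then show ?thesis using column_form_kernel[OF assms(1,2)] by simp
qed

lemma kernel_sign_along_edge:
  assumes "\<forall>i. comparison_mv A y i = 0" "graph_edge A i j"
  shows "(0 < y i \<longleftrightarrow> 0 < y j) \<and> (y i < 0 \<longleftrightarrow> y j < 0)"
proof -
  obtain c where c: "c \<in> S" "c i > 0" "c j > 0" using column_pos_at_edge[OF assms(2)] .
  have "i \<noteq> j" using assms(2) by (simp add: graph_edge_def)
  with c have "c i * y i = c j * y j" using kernel_balanced_on_column[OF assms(1)] by blast
  then show ?thesis using c(2,3) by (metis zero_less_mult_iff mult_less_0_iff not_less_iff_gr_or_eq)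
qed

lemma kernel_sign_constant:
  assumes "\<forall>i. comparison_mv A y i = 0"
  shows "(0 < y r \<longleftrightarrow> 0 < y v) \<and> (y r < 0 \<longleftrightarrow> y v < 0)"
proof -
  have "(graph_edge A)\<^sup>*\<^sup>* r v" using irreducible by (simp add: irreducible_mat_def)
  then show ?thesis
    by (induction rule: rtranclp_induct) (use kernel_sign_along_edge[OF assms] in blast)+
qed

lemma positive_kernel_vector:
  assumes "\<not> invertible (comparison_matrix A)"
  obtains z where "\<forall>i. 0 < z i" and "\<forall>i. comparison_mv A z i = 0"
proof -
  obtain y where y: "comparison_matrix A *v y = 0" "y \<noteq> 0"
    using assms unfolding invertible_left_inverse matrix_left_invertible_ker by blast
  define Y where "Y j = y $ j" for j
  have kernel: "\<forall>i. comparison_mv A Y i = 0"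
    using y(1) comparison_matrix_mult unfolding Y_def by (metis zero_index)
  obtain r where "Y r \<noteq> 0" using y(2) unfolding Y_def by (metis vec_eq_iff zero_index)
  then consider "0 < Y r" | "Y r < 0" by linarith
  then show ?thesis
  proof cases
    case 1
    then show ?thesis using that kernel_sign_constant[OF kernel, of r] kernel by blast
  next
    case 2
    have "comparison_mv A (\<lambda>i. - Y i) i = - comparison_mv A Y i" for i
      by (simp add: comparison_mv_def sum_negf)
    then show ?thesis
      using 2 that[of "\<lambda>i. - Y i"] kernel_sign_constant[OF kernel, of r] kernel by fastforce
  qed
qed

context
  fixes z assumes z_pos: "\<forall>i. 0 < z i" and z_kernel: "\<forall>i. comparison_mv A z i = 0"
begin

lemma column_unique_on_edge:
  assumes "c \<in> S" "d \<in> S" "p \<noteq> q" "c p > 0" "c q > 0" "d p > 0" "d q > 0"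
  shows "c = d"
proof (rule ccontr)
  assume "c \<noteq> d"
  have "c p * z p = c q * z q" "d p * z p = d q * z q"
    using kernel_balanced_on_column[OF z_kernel] assms by blast+
  then have "d p * c q * z q = c p * d q * z q" by (metis mult.assoc mult.commute)
  then have "d p * c q = c p * d q" using z_pos by (metis mult_right_cancel less_irrefl)
  moreover have "c l = 0" "d l = 0" if "l \<noteq> p" "l \<noteq> q" for l
    using column_zero_off_edge assms that by blast+
  ultimately have "d p * c l + - c p * d l = 0" for l
    by (cases "l = p \<or> l = q") (auto simp: mult.commute)
  then have "lin_dep_pair c d"
    unfolding lin_dep_pair_def using assms(6) by (intro exI[of _ "d p"] exI[of _ "- c p"]) simp
  then show False using columns_indep[OF assms(1,2) \<open>c \<noteq> d\<close>] by simp
qed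

lemma column_eq_kernel_column:
  assumes "c \<in> S" "p \<noteq> q" "c p > 0" "c q > 0"
  shows "c = kernel_column A z p q"
proof -
  have "(\<Sum>d\<in>S - {c}. d p * d q) = 0"
  proof (intro sum.neutral ballI)
    fix d assume d: "d \<in> S - {c}"
    show "d p * d q = 0"
    proof (rule ccontr)
      assume "d p * d q \<noteq> 0"
      then have "d p > 0" "d q > 0"
        using column_nonneg[of d p] column_nonneg[of d q] d by (auto simp: less_le)
      then show False using column_unique_on_edge[OF assms(1) _ assms(2-4)] d by blast
    qed
  qed
  then have a: "A $ p $ q = c p * c q"
    using entry_eq_sum[of p q] assms(1) finite_columns by (simp add: sum.remove)
  have bal: "c p * z p = c q * z q"
    using kernel_balanced_on_column[OF z_kernel assms] .
  have zp: "z p > 0" and zq: "z q > 0" using z_pos by auto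
  have "(c p)\<^sup>2 = A $ p $ q * z q / z p" "(c q)\<^sup>2 = A $ p $ q * z p / z q"
    using a bal zp zq by (simp_all add: power2_eq_square field_simps)
  then have "c p = sqrt (A $ p $ q * z q / z p)" "c q = sqrt (A $ p $ q * z p / z q)"
    using assms(3,4) by (metis abs_of_pos real_sqrt_abs)+
  moreover have "c l = 0" if "l \<noteq> p" "l \<noteq> q" for l
    using column_zero_off_edge[OF assms] that by simp
  ultimately show ?thesis unfolding kernel_column_def using assms(2) by (auto simp: fun_eq_iff)
qed

lemma column_pos_on_edge:
  assumes "c \<in> S"
  obtains p q where "p \<noteq> q" "c p > 0" "c q > 0"
proof -
  obtain p q where pq: "p \<noteq> q" "c p > 0" "\<forall>l. l \<noteq> p \<and> l \<noteq> q \<longrightarrow> c l = 0"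
    using column_support_pair[OF assms] .
  have "c q \<noteq> 0"
  proof
    assume "c q = 0"
    then have "column_form c z = (c p * z p)\<^sup>2" using column_form_two_points[OF pq(1,3)] by simp
    then have "c p * z p = 0" using column_form_kernel[OF z_kernel assms] by simp
    then show False using pq(2) z_pos by (metis mult_pos_pos less_irrefl)
  qed
  then show ?thesis using that pq column_nonneg[OF assms, of q] by simp
qed

lemma columns_eq_kernel_columns: "S = {kernel_column A z p q | p q. graph_edge A p q}"
proof (intro equalityI subsetI)
  fix c assume c: "c \<in> S"
  obtain p q where "p \<noteq> q" "c p > 0" "c q > 0" using column_pos_on_edge[OF c] .
  then show "c \<in> {kernel_column A z p q | p q. graph_edge A p q}"
    using column_eq_kernel_column[OF c] graph_edge_if_column_pos[OF c] by blast
next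
  fix w assume "w \<in> {kernel_column A z p q | p q. graph_edge A p q}"
  then obtain p q where w: "w = kernel_column A z p q" "graph_edge A p q" by blast
  obtain c where c: "c \<in> S" "c p > 0" "c q > 0" using column_pos_at_edge[OF w(2)] .
  have "p \<noteq> q" using w(2) by (simp add: graph_edge_def)
  then show "w \<in> S" using column_eq_kernel_column[OF c(1) _ c(2,3)] c(1) w(1) by simp
qed

end

end

lemma cp_columns_unique_if_singular:
  assumes "triangle_free_cp A" "\<not> invertible (comparison_matrix A)"
    and "cp_columns A S" "cp_columns A T"
  shows "S = T"
proof -
  interpret S: triangle_free_cp_columns A S using assms(1,3) by (simp add: triangle_free_cp_columns_def triangle_free_cp_columns_axioms_def)
  interpret T: triangle_free_cp_columns A T using assms(1,4) by (simp add: triangle_free_cp_columns_def triangle_free_cp_columns_axioms_def)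
  obtain z where "\<forall>i. 0 < z i" "\<forall>i. comparison_mv A z i = 0"
    using S.positive_kernel_vector[OF assms(2)] .
  then show ?thesis using S.columns_eq_kernel_columns T.columns_eq_kernel_columns by simp
qed

section \<open>Walks with multiplicative weights\<close>

locale weighted_graph =
  fixes E :: "'a \<Rightarrow> 'a \<Rightarrow> bool" and r :: "'a \<Rightarrow> 'a \<Rightarrow> real"
  assumes edge_sym: "E i j \<Longrightarrow> E j i"
    and edge_irrefl: "\<not> E i i"
    and weight_pos: "E i j \<Longrightarrow> r i j > 0"
    and weight_inverse: "E i j \<Longrightarrow> r j i * r i j = 1"
begin

definition walk :: "'a \<Rightarrow> 'a \<Rightarrow> nat \<Rightarrow> (nat \<Rightarrow> 'a) \<Rightarrow> bool" where
  "walk a b m w \<longleftrightarrow> w 0 = a \<and> w m = b \<and> (\<forall>i<m. E (w i) (w (Suc i)))"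

definition walk_weight :: "nat \<Rightarrow> (nat \<Rightarrow> 'a) \<Rightarrow> real" where
  "walk_weight m w = (\<Prod>i<m. r (w i) (w (Suc i)))"

definition closed_walk :: "nat \<Rightarrow> (nat \<Rightarrow> 'a) \<Rightarrow> bool" where
  "closed_walk m w \<longleftrightarrow> w m = w 0 \<and> (\<forall>i<m. E (w i) (w (Suc i)))"

lemma walk_weight_pos: "(\<forall>i<m. E (w i) (w (Suc i))) \<Longrightarrow> walk_weight m w > 0"
  unfolding walk_weight_def by (intro prod_pos) (auto intro: weight_pos)

lemma walk_weight_split:
  assumes "k \<le> m"
  shows "walk_weight m w = walk_weight k w * (\<Prod>i\<in>{k..<m}. r (w i) (w (Suc i)))"
  unfolding walk_weight_def using prod.atLeastLessThan_concat[of 0 k m "\<lambda>i. r (w i) (w (Suc i))"] assms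
  by (simp add: atLeast0LessThan)

lemma walk_snoc:
  assumes "walk a v m w" "E v u"
  shows "walk a u (Suc m) (\<lambda>i. if i \<le> m then w i else u) \<and>
         walk_weight (Suc m) (\<lambda>i. if i \<le> m then w i else u) = walk_weight m w * r v u"
proof
  show "walk a u (Suc m) (\<lambda>i. if i \<le> m then w i else u)"
    unfolding walk_def
  proof (intro conjI allI impI)
    show "(if 0 \<le> m then w 0 else u) = a" using assms by (simp add: walk_def)
    show "(if Suc m \<le> m then w (Suc m) else u) = u" by simp
  next
    fix i assume "i < Suc m"
    show "E (if i \<le> m then w i else u) (if Suc i \<le> m then w (Suc i) else u)"
    proof (cases "i < m")
      case True then show ?thesis using assms by (simp add: walk_def)
    next
      case False then have "i = m" using \<open>i < Suc m\<close> by simp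
      then show ?thesis using assms by (simp add: walk_def)
    qed
  qed
  have "walk_weight (Suc m) (\<lambda>i. if i \<le> m then w i else u) =
      (\<Prod>i<m. r (w i) (w (Suc i))) * r (w m) u"
    unfolding walk_weight_def by (simp add: lessThan_Suc)
  then show "walk_weight (Suc m) (\<lambda>i. if i \<le> m then w i else u) = walk_weight m w * r v u"
    using assms(1) by (simp add: walk_def walk_weight_def)
qed

lemma walk_exists:
  assumes "E\<^sup>*\<^sup>* a b"
  shows "\<exists>m w. walk a b m w"
  using assms
proof (induction rule: rtranclp_induct)
  case base
  show ?case unfolding walk_def by (intro exI[of _ 0] exI[of _ "\<lambda>_. a"]) simp
next
  case (step v u)
  then show ?case using walk_snoc by blast
qed

lemma walk_weight_reverse:
  assumes "\<forall>i<m. E (w i) (w (Suc i))"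
  shows "(\<Prod>i<m. r (w (m - i)) (w (m - Suc i))) * walk_weight m w = 1"
proof -
  have "(\<Prod>i<m. r (w (m - i)) (w (m - Suc i))) = (\<Prod>i<m. r (w (Suc i)) (w i))"
  proof -
    have "(\<Prod>i<m. r (w (m - i)) (w (m - Suc i))) = (\<Prod>i<m. (\<lambda>j. r (w (Suc j)) (w j)) (m - Suc i))"
      by (intro prod.cong) (auto simp: Suc_diff_Suc)
    also have "\<dots> = (\<Prod>i<m. r (w (Suc i)) (w i))" by (rule prod.nat_diff_reindex)
    finally show ?thesis .
  qed
  also have "\<dots> * walk_weight m w = (\<Prod>i<m. r (w (Suc i)) (w i) * r (w i) (w (Suc i)))"
    unfolding walk_weight_def by (simp add: prod.distrib)
  also have "\<dots> = 1" using assms by (intro prod.neutral) (simp add: weight_inverse)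
  finally show ?thesis .
qed

lemma closed_walk_reverse:
  assumes "closed_walk m w"
  shows "closed_walk m (\<lambda>i. w (m - i)) \<and> walk_weight m (\<lambda>i. w (m - i)) * walk_weight m w = 1"
proof
  show "closed_walk m (\<lambda>i. w (m - i))"
    unfolding closed_walk_def
  proof (intro conjI allI impI)
    show "w (m - m) = w (m - 0)" using assms by (simp add: closed_walk_def)
  next
    fix i assume "i < m"
    then have "E (w (m - Suc i)) (w (Suc (m - Suc i)))" using assms by (simp add: closed_walk_def)
    moreover have "Suc (m - Suc i) = m - i" using \<open>i < m\<close> by simp
    ultimately show "E (w (m - i)) (w (m - Suc i))" using edge_sym by simp
  qed
  show "walk_weight m (\<lambda>i. w (m - i)) * walk_weight m w = 1"
    using walk_weight_reverse[of m w] assms unfolding closed_walk_def walk_weight_def by simp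
qed

lemma closed_walk_of_walks:
  assumes p1: "walk a v m1 w1" and p2: "walk a v m2 w2"
  shows "closed_walk (m1 + m2) (\<lambda>i. if i \<le> m1 then w1 i else w2 (m1 + m2 - i))"
proof -
  define w where "w = (\<lambda>i. if i \<le> m1 then w1 i else w2 (m1 + m2 - i))"
  have e1: "\<forall>i<m1. E (w1 i) (w1 (Suc i))" and e2: "\<forall>i<m2. E (w2 i) (w2 (Suc i))"
    and ends: "w1 0 = a" "w1 m1 = v" "w2 0 = a" "w2 m2 = v"
    using p1 p2 by (auto simp: walk_def)
  have "closed_walk (m1 + m2) w"
    unfolding closed_walk_def
  proof (intro conjI allI impI)
    show "w (m1 + m2) = w 0" using ends by (cases "m2 = 0") (auto simp: w_def)
  next
    fix i assume i: "i < m1 + m2"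
    show "E (w i) (w (Suc i))"
    proof (cases "i < m1")
      case True then show ?thesis using e1 by (simp add: w_def)
    next
      case False
      define k where "k = m1 + m2 - Suc i"
      have k: "k < m2" "m1 + m2 - i = Suc k" using False i by (auto simp: k_def)
      have "E (w2 (Suc k)) (w2 k)" using e2 k(1) edge_sym by blast
      moreover have "w i = w2 (Suc k)"
        using False k ends by (cases "i = m1") (auto simp: w_def)
      moreover have "w (Suc i) = w2 k" using False k by (simp add: w_def k_def)
      ultimately show ?thesis by simp
    qed
  qed
  then show ?thesis by (simp add: w_def)
qed

lemma walk_weight_of_walks:
  assumes p1: "walk a v m1 w1" and p2: "walk a v m2 w2"
  shows "walk_weight (m1 + m2) (\<lambda>i. if i \<le> m1 then w1 i else w2 (m1 + m2 - i)) * walk_weight m2 w2 =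
    walk_weight m1 w1"
proof -
  define w where "w = (\<lambda>i. if i \<le> m1 then w1 i else w2 (m1 + m2 - i))"
  have e2: "\<forall>i<m2. E (w2 i) (w2 (Suc i))" and ends: "w1 m1 = v" "w2 m2 = v"
    using p1 p2 by (auto simp: walk_def)
  have "walk_weight (m1 + m2) w = walk_weight m1 w * (\<Prod>i\<in>{m1..<m1+m2}. r (w i) (w (Suc i)))"
    by (rule walk_weight_split) simp
  also have "walk_weight m1 w = walk_weight m1 w1" unfolding walk_weight_def w_def by (intro prod.cong) auto
  also have "(\<Prod>i\<in>{m1..<m1+m2}. r (w i) (w (Suc i))) = (\<Prod>i<m2. r (w2 (m2 - i)) (w2 (m2 - Suc i)))"
  proof -
    have "(\<Prod>i\<in>{m1..<m1+m2}. r (w i) (w (Suc i))) = (\<Prod>i\<in>{0..<m2}. r (w (m1 + i)) (w (Suc (m1 + i))))"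
      using prod.atLeastLessThan_shift_0[of "\<lambda>i. r (w i) (w (Suc i))" m1 "m1+m2"] by (simp add: comp_def)
    also have "\<dots> = (\<Prod>i<m2. r (w2 (m2 - i)) (w2 (m2 - Suc i)))"
    proof (intro prod.cong)
      fix i assume "i \<in> {..<m2}"
      have "w (m1 + i) = w2 (m2 - i)" using ends by (cases "i = 0") (auto simp: w_def)
      moreover have "w (Suc (m1 + i)) = w2 (m2 - Suc i)" by (simp add: w_def)
      ultimately show "r (w (m1 + i)) (w (Suc (m1 + i))) = r (w2 (m2 - i)) (w2 (m2 - Suc i))" by simp
    qed (simp add: atLeast0LessThan)
    finally show ?thesis .
  qed
  finally have "walk_weight (m1 + m2) w * walk_weight m2 w2 =
      walk_weight m1 w1 * ((\<Prod>i<m2. r (w2 (m2 - i)) (w2 (m2 - Suc i))) * walk_weight m2 w2)"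
    by (simp add: mult.assoc)
  also have "\<dots> = walk_weight m1 w1" using walk_weight_reverse[OF e2] by simp
  finally show ?thesis by (simp add: w_def)
qed

theorem potential_if_closed_walk_weights_1:
  assumes conn: "\<forall>u v. E\<^sup>*\<^sup>* u v" and allone: "\<forall>m w. closed_walk m w \<longrightarrow> walk_weight m w = 1"
  shows "\<exists>y. (\<forall>v. y v > 0) \<and> (\<forall>i j. E i j \<longrightarrow> y j = y i * r i j)"
proof -
  fix a :: 'a
  have ex: "\<exists>m w. walk a v m w" for v using walk_exists conn by blast
  have wd: "walk a v m1 w1 \<Longrightarrow> walk a v m2 w2 \<Longrightarrow> walk_weight m1 w1 = walk_weight m2 w2" for v m1 w1 m2 w2
  proof -
    assume p1: "walk a v m1 w1" and p2: "walk a v m2 w2"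
    from closed_walk_of_walks[OF p1 p2] walk_weight_of_walks[OF p1 p2] allone show ?thesis by force
  qed
  define y where "y v = walk_weight (fst (SOME p. walk a v (fst p) (snd p))) (snd (SOME p. walk a v (fst p) (snd p)))" for v
  have yp: "walk a v m w \<Longrightarrow> y v = walk_weight m w" for v m w
  proof -
    assume pw: "walk a v m w"
    have "\<exists>p. walk a v (fst p) (snd p)" using pw by (intro exI[of _ "(m, w)"]) simp
    then have "walk a v (fst (SOME p. walk a v (fst p) (snd p))) (snd (SOME p. walk a v (fst p) (snd p)))"
      by (rule someI_ex)
    then show "y v = walk_weight m w" unfolding y_def using wd pw by blast
  qed
  show ?thesis
  proof (intro exI conjI allI impI)
    fix v
    obtain m w where p: "walk a v m w" using ex by blast
    show "y v > 0" using yp[OF p] walk_weight_pos p by (simp add: walk_def)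
  next
    fix i j assume e: "E i j"
    obtain m w where p: "walk a i m w" using ex by blast
    show "y j = y i * r i j"
      using walk_snoc[OF p e] yp p by metis
  qed
qed

lemma closed_walk_split:
  assumes c: "closed_walk m w" and ab: "a < b" "b \<le> m" "w a = w b"
  defines "wi \<equiv> (\<lambda>i. w (a + i))" and "wo \<equiv> (\<lambda>i. if i \<le> a then w i else w (i + (b - a)))"
  shows "closed_walk (b - a) wi" and "closed_walk (m - (b - a)) wo"
proof -
  have e: "\<forall>i<m. E (w i) (w (Suc i))" and cl: "w m = w 0" using c by (auto simp: closed_walk_def)
  show "closed_walk (b - a) wi" unfolding closed_walk_def wi_def using e ab by auto
  show "closed_walk (m - (b - a)) wo"
    unfolding closed_walk_def
  proof (intro conjI allI impI)
    show "wo (m - (b - a)) = wo 0"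
      using ab cl by (cases "b = m") (auto simp: wo_def)
  next
    fix i assume i: "i < m - (b - a)"
    show "E (wo i) (wo (Suc i))"
    proof (cases "i < a")
      case True then show ?thesis using e ab by (simp add: wo_def)
    next
      case False
      then have "wo i = w (i + (b - a))" using ab by (cases "i = a") (auto simp: wo_def)
      moreover have "wo (Suc i) = w (Suc (i + (b - a)))" using False by (simp add: wo_def)
      moreover have "i + (b - a) < m" using i ab by simp
      ultimately show ?thesis using e by simp
    qed
  qed
qed

lemma walk_weight_split_closed_walk:
  fixes w :: "nat \<Rightarrow> 'a"
  assumes "a < b" "b \<le> m" "w a = w b"
  defines "wi \<equiv> (\<lambda>i. w (a + i))" and "wo \<equiv> (\<lambda>i. if i \<le> a then w i else w (i + (b - a)))"
  shows "walk_weight m w = walk_weight (b - a) wi * walk_weight (m - (b - a)) wo"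
proof -
  define f where "f i = r (w i) (w (Suc i))" for i
  have wm: "walk_weight m w = walk_weight a w * (\<Prod>i\<in>{a..<b}. f i) * (\<Prod>i\<in>{b..<m}. f i)"
  proof -
    have "walk_weight m w = walk_weight a w * (\<Prod>i\<in>{a..<m}. f i)"
      using walk_weight_split[of a m w] assms(1,2) by (simp add: f_def)
    also have "(\<Prod>i\<in>{a..<m}. f i) = (\<Prod>i\<in>{a..<b}. f i) * (\<Prod>i\<in>{b..<m}. f i)"
      using prod.atLeastLessThan_concat[of a b m f] assms(1,2) by simp
    finally show ?thesis by (simp add: mult.assoc)
  qed
  have wi: "walk_weight (b - a) wi = (\<Prod>i\<in>{a..<b}. f i)"
  proof -
    have "(\<Prod>i\<in>{a..<b}. f i) = (\<Prod>i\<in>{0..<b - a}. f (a + i))"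
      using prod.atLeastLessThan_shift_0[of f a b] by (simp add: comp_def)
    then show ?thesis by (simp add: walk_weight_def wi_def f_def atLeast0LessThan)
  qed
  have wo: "walk_weight (m - (b - a)) wo = walk_weight a w * (\<Prod>i\<in>{b..<m}. f i)"
  proof -
    have "walk_weight (m - (b - a)) wo =
        walk_weight a wo * (\<Prod>i\<in>{a..<m - (b - a)}. r (wo i) (wo (Suc i)))"
      using walk_weight_split[of a "m - (b - a)" wo] assms(1,2) by simp
    also have "walk_weight a wo = walk_weight a w" unfolding walk_weight_def wo_def by (intro prod.cong) auto
    also have "(\<Prod>i\<in>{a..<m - (b - a)}. r (wo i) (wo (Suc i))) =
        (\<Prod>i\<in>{a..<m - (b - a)}. f (i + (b - a)))"
    proof (intro prod.cong refl)
      fix i assume i: "i \<in> {a..<m - (b - a)}"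
      have "wo i = w (i + (b - a))" using assms(1-3) i by (cases "i = a") (auto simp: wo_def)
      moreover have "wo (Suc i) = w (Suc (i + (b - a)))" using i by (simp add: wo_def)
      ultimately show "r (wo i) (wo (Suc i)) = f (i + (b - a))" by (simp add: f_def)
    qed
    also have "\<dots> = (\<Prod>i\<in>{b..<m}. f i)"
      using prod.shift_bounds_nat_ivl[of f a "b - a" "m - (b - a)"] assms(1,2) by simp
    finally show ?thesis .
  qed
  show ?thesis
    using wm wi wo by (simp add: ac_simps)
qed


lemma closed_walk_weight_less_1_exists:
  assumes "closed_walk m w" "walk_weight m w \<noteq> 1"
  shows "\<exists>m w. closed_walk m w \<and> walk_weight m w < 1"
proof (cases "walk_weight m w < 1")
  case False
  then have gt: "walk_weight m w > 1" using assms(2) by simp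
  obtain rev: "closed_walk m (\<lambda>i. w (m - i))" "walk_weight m (\<lambda>i. w (m - i)) * walk_weight m w = 1"
    using closed_walk_reverse[OF assms(1)] by blast
  have "walk_weight m (\<lambda>i. w (m - i)) < 1"
    using rev(2) gt by (metis less_le_not_le mult_le_cancel_right1 nle_le order.strict_trans zero_less_one)
  then show ?thesis using rev(1) by blast
qed (use assms in blast)

text \<open>A shortest closed walk of weight below \<open>1\<close> is a cycle: cutting it at a repeated vertex
  splits its weight into two positive factors, one of which is again below \<open>1\<close>.\<close>

theorem simple_closed_walk_weight_less_1:
  assumes "closed_walk m0 w0" "walk_weight m0 w0 \<noteq> 1"
  obtains m w where "closed_walk m w" "walk_weight m w < 1" "3 \<le> m"
    and "\<forall>a b. a < b \<and> b \<le> m \<and> w a = w b \<longrightarrow> a = 0 \<and> b = m"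
proof -
  define P where "P m \<longleftrightarrow> (\<exists>w. closed_walk m w \<and> walk_weight m w < 1)" for m
  have "\<exists>m. P m" using closed_walk_weight_less_1_exists[OF assms] unfolding P_def by blast
  define m where "m = (LEAST m. P m)"
  obtain w where w: "closed_walk m w" "walk_weight m w < 1"
    using LeastI_ex[OF \<open>\<exists>m. P m\<close>] unfolding P_def m_def by blast
  have minimal: "m' < m \<Longrightarrow> \<not> P m'" for m' unfolding m_def by (rule not_less_Least)
  have simple: "\<forall>a b. a < b \<and> b \<le> m \<and> w a = w b \<longrightarrow> a = 0 \<and> b = m"
  proof (intro allI impI)
    fix a b assume ab: "a < b \<and> b \<le> m \<and> w a = w b"
    show "a = 0 \<and> b = m"
    proof (rule ccontr)
      assume "\<not> (a = 0 \<and> b = m)"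
      then have shorter: "b - a < m" "m - (b - a) < m" using ab by auto
      define wi where "wi = (\<lambda>i. w (a + i))"
      define wo where "wo = (\<lambda>i. if i \<le> a then w i else w (i + (b - a)))"
      have split: "closed_walk (b - a) wi" "closed_walk (m - (b - a)) wo"
          "walk_weight m w = walk_weight (b - a) wi * walk_weight (m - (b - a)) wo"
        using closed_walk_split[OF w(1)] walk_weight_split_closed_walk ab unfolding wi_def wo_def
        by blast+
      have "walk_weight (b - a) wi > 0" "walk_weight (m - (b - a)) wo > 0"
        using split(1,2) walk_weight_pos by (auto simp: closed_walk_def)
      then have "walk_weight (b - a) wi < 1 \<or> walk_weight (m - (b - a)) wo < 1"
        using split(3) w(2) by (metis less_le_not_le mult_le_cancel_left1 nle_le order.strict_trans1)
      then show False using minimal shorter split(1,2) unfolding P_def by blast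
    qed
  qed
  have "m \<noteq> 0" using w(2) by (metis lessThan_0 prod.empty walk_weight_def less_irrefl)
  moreover have "m \<noteq> 1" using w(1) edge_irrefl by (auto simp: closed_walk_def)
  moreover have "m \<noteq> 2"
  proof
    assume m2: "m = 2"
    then have "E (w 0) (w 1)" "w 2 = w 0" using w(1) by (auto simp: closed_walk_def)
    then have "walk_weight m w = 1"
      using m2 weight_inverse by (simp add: walk_weight_def numeral_2_eq_2 lessThan_Suc mult.commute)
    then show False using w(2) by simp
  qed
  ultimately show ?thesis using that w simple by force
qed

end

section \<open>Periodic orbits of compositions of Moebius maps\<close>

primrec mobius_orbit :: "(nat \<Rightarrow> real) \<Rightarrow> (nat \<Rightarrow> real) \<Rightarrow> real \<Rightarrow> nat \<Rightarrow> real" where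
  "mobius_orbit b \<sigma> s 0 = s"
| "mobius_orbit b \<sigma> s (Suc i) = \<sigma> (Suc i) + b i / \<sigma> i - b i / mobius_orbit b \<sigma> s i"

lemma mobius_orbit_start: "mobius_orbit b \<sigma> (\<sigma> 0) i = \<sigma> i"
  by (induction i) simp_all

lemma mobius_orbit_ge:
  assumes "\<forall>i<m. 0 < \<sigma> i" "\<forall>i. 0 \<le> b i" "i \<le> m" "\<sigma> 0 \<le> s"
  shows "\<sigma> i \<le> mobius_orbit b \<sigma> s i"
  using assms(3)
proof (induction i)
  case (Suc i)
  then have "\<sigma> i \<le> mobius_orbit b \<sigma> s i" "0 < \<sigma> i" using assms(1) by simp_all
  then have "b i / mobius_orbit b \<sigma> s i \<le> b i / \<sigma> i"
    using assms(2) by (intro divide_left_mono) auto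
  then show ?case by simp
qed (use assms(4) in simp)

lemma mobius_orbit_pos:
  assumes "\<forall>i\<le>m. 0 < \<sigma> i" "\<forall>i. 0 \<le> b i" "i \<le> m" "\<sigma> 0 \<le> s"
  shows "0 < mobius_orbit b \<sigma> s i"
  using mobius_orbit_ge[of m \<sigma> b i s] assms by (meson less_le_trans less_imp_le_nat order.refl)

lemma continuous_on_mobius_orbit:
  assumes "\<forall>i\<le>m. 0 < \<sigma> i" "\<forall>i. 0 \<le> b i" "i \<le> m"
  shows "continuous_on {\<sigma> 0..} (\<lambda>s. mobius_orbit b \<sigma> s i)"
  using assms(3)
proof (induction i)
  case (Suc i)
  have "0 < mobius_orbit b \<sigma> s i" if "s \<in> {\<sigma> 0..}" for s
    using mobius_orbit_pos[OF assms(1,2) Suc_leD[OF Suc.prems]] that by simp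
  then have "mobius_orbit b \<sigma> s i \<noteq> 0" if "s \<in> {\<sigma> 0..}" for s
    using that by (metis less_irrefl)
  with Suc show ?case by (auto intro!: continuous_intros)
qed (simp add: continuous_on_id)

lemma has_field_derivative_mobius_orbit:
  assumes "\<forall>i\<le>m. 0 < \<sigma> i" "i \<le> m"
  shows "((\<lambda>s. mobius_orbit b \<sigma> s i) has_field_derivative (\<Prod>j<i. b j / (\<sigma> j)\<^sup>2)) (at (\<sigma> 0))"
  using assms(2)
proof (induction i)
  case (Suc i)
  have "0 < \<sigma> i" using assms(1) Suc_leD[OF Suc.prems] by simp
  then have "\<sigma> i \<noteq> 0" by simp
  then have "((\<lambda>s. \<sigma> (Suc i) + b i / \<sigma> i - b i / mobius_orbit b \<sigma> s i) has_field_derivative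
      0 - (0 * \<sigma> i - b i * (\<Prod>j<i. b j / (\<sigma> j)\<^sup>2)) / (\<sigma> i * \<sigma> i)) (at (\<sigma> 0))"
    using Suc by (auto intro!: derivative_eq_intros simp: mobius_orbit_start)
  then show ?case by (simp add: power2_eq_square field_simps)
qed simp

text \<open>Since the orbit through \<open>\<sigma> 0\<close> is periodic with multiplier above \<open>1\<close> there, and the
  orbit's endpoint stays bounded as its start grows, the intermediate value theorem yields another
  periodic orbit starting above \<open>\<sigma> 0\<close>.\<close>

lemma larger_periodic_mobius_orbit:
  assumes "1 \<le> m" "\<forall>i. 0 \<le> b i" "\<forall>i\<le>m. 0 < \<sigma> i" "\<sigma> m = \<sigma> 0"
    and "(\<Prod>i<m. b i / (\<sigma> i)\<^sup>2) > 1"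
  obtains s where "\<sigma> 0 < s" "mobius_orbit b \<sigma> s m = s" "\<forall>i\<le>m. 0 < mobius_orbit b \<sigma> s i"
proof -
  define h where "h s = mobius_orbit b \<sigma> s m - s" for s
  have "(h has_field_derivative (\<Prod>i<m. b i / (\<sigma> i)\<^sup>2) - 1) (at (\<sigma> 0))"
    unfolding h_def using assms(3)
    by (auto intro!: derivative_eq_intros has_field_derivative_mobius_orbit)
  moreover have "(\<Prod>i<m. b i / (\<sigma> i)\<^sup>2) - 1 > 0" using assms(5) by simp
  ultimately obtain \<delta> where \<delta>: "\<delta> > 0" "\<forall>t>0. t < \<delta> \<longrightarrow> h (\<sigma> 0) < h (\<sigma> 0 + t)"
    by (metis DERIV_pos_inc_right)
  define s1 where "s1 = \<sigma> 0 + \<delta> / 2"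
  have s1: "\<sigma> 0 < s1" "0 < h s1"
    using \<delta> assms(4) by (simp_all add: s1_def h_def mobius_orbit_start)
  obtain k where k: "m = Suc k" using assms(1) by (cases m) auto
  define s2 where "s2 = max s1 (\<sigma> m + b k / \<sigma> k) + 1"
  have s12: "s1 \<le> s2" by (simp add: s2_def)
  have "0 < mobius_orbit b \<sigma> s2 k" using mobius_orbit_pos[OF assms(3,2)] k s1(1) s12 by simp
  then have "mobius_orbit b \<sigma> s2 m \<le> \<sigma> m + b k / \<sigma> k" using assms(2) k by simp
  then have "h s2 < 0" by (simp add: h_def s2_def)
  moreover have "continuous_on {s1..s2} h"
    unfolding h_def using s1(1) assms(2,3)
    by (intro continuous_intros continuous_on_subset[OF continuous_on_mobius_orbit]) auto
  ultimately obtain s where s: "s1 \<le> s" "s \<le> s2" "h s = 0"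
    using IVT2'[of h s2 0 s1] s1(2) s12 by force
  show ?thesis
    using that[of s] s s1(1) mobius_orbit_pos[OF assms(3,2)] by (simp add: h_def)
qed

section \<open>Deforming the columns along a cycle\<close>

definition pos_support :: "('n \<Rightarrow> real) \<Rightarrow> 'n set" where
  "pos_support c = {l. 0 < c l}"

lemma pairwise_not_lin_dep_if_inj_on_pos_support:
  assumes "\<forall>e\<in>X. \<forall>i. 0 \<le> e i" "\<forall>e\<in>X. pos_support e \<noteq> {}" "inj_on pos_support X"
  shows "pairwise (\<lambda>e f. \<not> lin_dep_pair e f) X"
proof (rule pairwiseI)
  fix e f assume ef: "e \<in> X" "f \<in> X" "e \<noteq> f"
  then have "pos_support e \<noteq> pos_support f" using assms(3) by (auto dest: inj_onD)
  then obtain l where l: "(e l > 0) \<noteq> (f l > 0)" unfolding pos_support_def by auto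
  have "pos_support e \<noteq> {}" "pos_support f \<noteq> {}" using assms(2) ef by auto
  then obtain k k' where "k \<in> pos_support e" "k' \<in> pos_support f" by blast
  then have "e k > 0" "f k' > 0" by (simp_all add: pos_support_def)
  with l show "\<not> lin_dep_pair e f"
    using assms(1) ef(1,2) by (intro not_lin_dep_pair_if_supports_differ[of e f k k' l]) auto
qed

lemma exchange_preserves_inj_on_pos_support:
  assumes S: "inj_on pos_support S" and C: "C \<subseteq> S"
    and N: "inj_on pos_support N" "pos_support ` N = pos_support ` C"
  shows "inj_on pos_support ((S - C) \<union> N)" and "(S - C) \<inter> N = {}" and "card N = card C"
proof -
  have C_inj: "inj_on pos_support C" using S C by (rule inj_on_subset)
  have out: "pos_support e \<noteq> pos_support n" if "e \<in> S - C" "n \<in> N" for e n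
  proof
    assume eq: "pos_support e = pos_support n"
    obtain c where "c \<in> C" "pos_support n = pos_support c" using N(2) \<open>n \<in> N\<close> by blast
    then show False using S C that eq by (metis DiffE inj_onD subsetD)
  qed
  show "inj_on pos_support ((S - C) \<union> N)"
    using inj_on_subset[OF S, of "S - C"] N(1) out by (auto simp: inj_on_Un)
  show "(S - C) \<inter> N = {}" using out by blast
  show "card N = card C" using N card_image C_inj by metis
qed

lemma sum_lessThan_shift_periodic:
  fixes g :: "nat \<Rightarrow> 'a::cancel_comm_monoid_add"
  assumes "g m = g 0"
  shows "(\<Sum>i<m. g (Suc i)) = (\<Sum>i<m. g i)"
proof -
  have "g 0 + (\<Sum>i<m. g (Suc i)) = (\<Sum>i<Suc m. g i)" by (rule sum.lessThan_Suc_shift[symmetric])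
  also have "\<dots> = g 0 + (\<Sum>i<m. g i)" using assms by (simp add: add.commute)
  finally show ?thesis by simp
qed

definition cycle_column :: "(nat \<Rightarrow> 'n) \<Rightarrow> (nat \<Rightarrow> real) \<Rightarrow> (nat \<Rightarrow> real) \<Rightarrow> nat \<Rightarrow> 'n \<Rightarrow> real" where
  "cycle_column w a s i l =
     (if l = w i then sqrt (s i) else if l = w (Suc i) then a i / sqrt (s i) else 0)"

lemma pos_support_cycle_column:
  assumes "0 < s i" "0 < a i"
  shows "pos_support (cycle_column w a s i) = {w i, w (Suc i)}"
  using assms by (auto simp: pos_support_def cycle_column_def)

lemma cycle_column_nonneg: "0 < s i \<Longrightarrow> 0 \<le> a i \<Longrightarrow> 0 \<le> cycle_column w a s i l"
  by (simp add: cycle_column_def)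

lemma cycle_column_outer:
  assumes "w i \<noteq> w (Suc i)" "0 < s i"
  shows "cycle_column w a s i l * cycle_column w a s i l' =
    (if l = l' then (if l = w i then s i else 0) + (if l = w (Suc i) then (a i)\<^sup>2 / s i else 0)
     else if {l, l'} = {w i, w (Suc i)} then a i else 0)"
  using assms by (auto simp: cycle_column_def power2_eq_square doubleton_eq_iff)

text \<open>On the diagonal, the entries at \<open>w i\<close> telescope around the cycle.\<close>

lemma sum_cycle_column_outer_eq:
  assumes "w m = w 0" "\<forall>i<m. w i \<noteq> w (Suc i)" "\<forall>i<m. 0 < s i" "\<forall>i<m. 0 < s' i"
    and "s m = s 0" "s' m = s' 0"
    and "\<forall>i<m. s' (Suc i) + (a i)\<^sup>2 / s' i = s (Suc i) + (a i)\<^sup>2 / s i"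
  shows "(\<Sum>i<m. cycle_column w a s' i l * cycle_column w a s' i l') =
    (\<Sum>i<m. cycle_column w a s i l * cycle_column w a s i l')"
proof -
  define D where "D t = (\<Sum>i<m. (if l = w i then t i else 0) + (if l = w (Suc i) then (a i)\<^sup>2 / t i else 0))"
    for t :: "nat \<Rightarrow> real"
  define Off where "Off = (\<Sum>i<m. if {l, l'} = {w i, w (Suc i)} then a i else 0)"
  have outer: "(\<Sum>i<m. cycle_column w a t i l * cycle_column w a t i l') = (if l = l' then D t else Off)"
    if "\<forall>i<m. 0 < t i" for t
    unfolding D_def Off_def using assms(2) that
    by (cases "l = l'") (auto simp: cycle_column_outer intro!: sum.cong)
  have D: "D t = (\<Sum>i<m. if l = w (Suc i) then t (Suc i) + (a i)\<^sup>2 / t i else 0)" if "t m = t 0" for t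
  proof -
    have "D t = (\<Sum>i<m. if l = w i then t i else 0) + (\<Sum>i<m. if l = w (Suc i) then (a i)\<^sup>2 / t i else 0)"
      by (simp add: D_def sum.distrib)
    also have "(\<Sum>i<m. if l = w i then t i else 0) = (\<Sum>i<m. if l = w (Suc i) then t (Suc i) else 0)"
      using sum_lessThan_shift_periodic[of "\<lambda>i. if l = w i then t i else 0" m] assms(1) that by simp
    finally show ?thesis unfolding sum.distrib[symmetric] by (rule trans) (auto intro!: sum.cong)
  qed
  have "D s' = D s"
    unfolding D[OF assms(5)] D[OF assms(6)] using assms(7) by (intro sum.cong) auto
  then show ?thesis using outer[OF assms(3)] outer[OF assms(4)] by simp
qed

lemma simple_cycle_inj_edges:
  assumes "3 \<le> m" "\<forall>i<m. w i \<noteq> w (Suc i)"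
    and simple: "\<forall>a b. a < b \<and> b \<le> m \<and> w a = w b \<longrightarrow> a = 0 \<and> b = m"
  shows "inj_on (\<lambda>i. {w i, w (Suc i)}) {..<m}"
proof (rule inj_onI)
  fix i j assume ij: "i \<in> {..<m}" "j \<in> {..<m}" and eq: "{w i, w (Suc i)} = {w j, w (Suc j)}"
  have same: "a = b \<or> (a = 0 \<and> b = m) \<or> (a = m \<and> b = 0)" if "a \<le> m" "b \<le> m" "w a = w b" for a b
    using simple that by (metis linorder_neqE_nat)
  from eq consider "w i = w j" | "w i = w (Suc j)" "w (Suc i) = w j"
    by (auto simp: doubleton_eq_iff)
  then show "i = j"
  proof cases
    case 1
    then show ?thesis using same[of i j] ij by auto
  next
    case 2
    then show ?thesis using same[of i "Suc j"] same[of "Suc i" j] ij assms(1) by auto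
  qed
qed

lemma simple_cycle_columns:
  assumes "3 \<le> m" "\<forall>i<m. w i \<noteq> w (Suc i)" "\<forall>a b. a < b \<and> b \<le> m \<and> w a = w b \<longrightarrow> a = 0 \<and> b = m"
    and "\<forall>i<m. 0 < s i" "\<forall>i<m. 0 < a i"
  shows "inj_on (pos_support \<circ> cycle_column w a s) {..<m}"
    and "pos_support ` cycle_column w a s ` {..<m} = (\<lambda>i. {w i, w (Suc i)}) ` {..<m}"
proof -
  have supp: "pos_support (cycle_column w a s i) = {w i, w (Suc i)}" if "i < m" for i
    using pos_support_cycle_column[of s i a w] assms(4,5) that by simp
  show "inj_on (pos_support \<circ> cycle_column w a s) {..<m}"
    using simple_cycle_inj_edges[OF assms(1-3)]
    by (rule inj_on_cong[THEN iffD1, rotated]) (simp add: supp)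
  show "pos_support ` cycle_column w a s ` {..<m} = (\<lambda>i. {w i, w (Suc i)}) ` {..<m}"
    unfolding image_image using supp by (intro image_cong) simp_all
qed

lemma cycle_column_notin_other_cycle:
  assumes "3 \<le> m" "\<forall>i<m. w i \<noteq> w (Suc i)" "\<forall>a b. a < b \<and> b \<le> m \<and> w a = w b \<longrightarrow> a = 0 \<and> b = m"
    and "\<forall>i<m. 0 < s i" "\<forall>i<m. 0 < s' i" "\<forall>i<m. 0 < a i" "s' 0 \<noteq> s 0"
  shows "cycle_column w a s' 0 \<notin> cycle_column w a s ` {..<m}"
proof
  assume "cycle_column w a s' 0 \<in> cycle_column w a s ` {..<m}"
  then obtain j where j: "j < m" "cycle_column w a s' 0 = cycle_column w a s j" by auto
  moreover have "pos_support (cycle_column w a s' 0) = {w 0, w (Suc 0)}"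
    using pos_support_cycle_column[of s' 0 a w] assms(1,5,6) by simp
  moreover have "pos_support (cycle_column w a s j) = {w j, w (Suc j)}"
    using pos_support_cycle_column[of s j a w] assms(4,6) j(1) by simp
  ultimately have "{w 0, w (Suc 0)} = {w j, w (Suc j)}" by simp
  then have "j = 0" using inj_onD[OF simple_cycle_inj_edges[OF assms(1-3)], of 0 j] j(1) assms(1)
    by simp
  then have "sqrt (s' 0) = sqrt (s 0)" using j(2) by (metis cycle_column_def)
  then show False using assms(1,4,5,7) by simp
qed

lemma cp_columns_exchange_cycle:
  assumes S: "cp_columns A S" "inj_on pos_support S" "\<forall>e\<in>S. pos_support e \<noteq> {}"
    and cycle: "3 \<le> m" "w m = w 0" "\<forall>i<m. w i \<noteq> w (Suc i)"
      "\<forall>a b. a < b \<and> b \<le> m \<and> w a = w b \<longrightarrow> a = 0 \<and> b = m"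
    and C: "\<forall>i<m. cycle_column w a \<sigma> i \<in> S" "\<forall>i<m. 0 < a i"
    and \<sigma>: "\<forall>i<m. 0 < \<sigma> i" "\<forall>i<m. 0 < \<sigma>' i" "\<sigma> m = \<sigma> 0" "\<sigma>' m = \<sigma>' 0" "\<sigma>' 0 \<noteq> \<sigma> 0"
      "\<forall>i<m. \<sigma>' (Suc i) + (a i)\<^sup>2 / \<sigma>' i = \<sigma> (Suc i) + (a i)\<^sup>2 / \<sigma> i"
  obtains T where "cp_columns A T" "card T = card S" "T \<noteq> S"
proof -
  define C where "C = cycle_column w a \<sigma> ` {..<m}"
  define N where "N = cycle_column w a \<sigma>' ` {..<m}"
  note old = simple_cycle_columns[OF cycle(1,3,4) \<sigma>(1) C(2)]
  note new = simple_cycle_columns[OF cycle(1,3,4) \<sigma>(2) C(2)]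
  have gram: "(\<Sum>e\<in>C. e i * e i') = (\<Sum>j<m. cycle_column w a \<sigma> j i * cycle_column w a \<sigma> j i')"
    "(\<Sum>e\<in>N. e i * e i') = (\<Sum>j<m. cycle_column w a \<sigma>' j i * cycle_column w a \<sigma>' j i')" for i i'
    unfolding C_def N_def
    by (simp_all add: sum.reindex[OF inj_on_imageI2[OF old(1)]] sum.reindex[OF inj_on_imageI2[OF new(1)]])
  have CS: "C \<subseteq> S" using C(1) by (auto simp: C_def)
  have "inj_on pos_support N" unfolding N_def by (rule inj_on_imageI[OF new(1)])
  moreover have "pos_support ` N = pos_support ` C" unfolding N_def C_def old(2) new(2) ..
  ultimately have T: "inj_on pos_support ((S - C) \<union> N)" "(S - C) \<inter> N = {}" "card N = card C"
    by (rule exchange_preserves_inj_on_pos_support[OF S(2) CS])+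
  have "\<forall>e\<in>N. \<forall>i. 0 \<le> e i"
  proof (clarsimp simp: N_def)
    fix j l assume "j < m"
    then have "0 < \<sigma>' j" "0 \<le> a j" using \<sigma>(2) C(2) by (simp_all add: less_imp_le)
    then show "0 \<le> cycle_column w a \<sigma>' j l" by (rule cycle_column_nonneg)
  qed
  moreover have "\<forall>i i'. (\<Sum>e\<in>N. e i * e i') = (\<Sum>e\<in>C. e i * e i')"
    unfolding gram using sum_cycle_column_outer_eq[OF cycle(2,3) \<sigma>(1-4,6)] by simp
  moreover have "pairwise (\<lambda>e f. \<not> lin_dep_pair e f) ((S - C) \<union> N)"
  proof (rule pairwise_not_lin_dep_if_inj_on_pos_support[OF _ _ T(1)])
    show "\<forall>e\<in>(S - C) \<union> N. \<forall>i. 0 \<le> e i" using S(1) calculation(1) by (auto simp: cp_columns_def)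
    have "pos_support (cycle_column w a \<sigma>' j) \<noteq> {}" if "j < m" for j
      using pos_support_cycle_column[of \<sigma>' j a w] \<sigma>(2) C(2) that by simp
    then show "\<forall>e\<in>(S - C) \<union> N. pos_support e \<noteq> {}" using S(3) by (auto simp: N_def)
  qed
  ultimately have "cp_columns A ((S - C) \<union> N)" "card ((S - C) \<union> N) = card S"
    using cp_columns_exchange[OF S(1) CS _ T(2,3)] by (auto simp: N_def)
  moreover have "(S - C) \<union> N \<noteq> S"
  proof -
    have "cycle_column w a \<sigma>' 0 \<in> N - C"
      using cycle_column_notin_other_cycle[OF cycle(1,3,4) \<sigma>(1,2) C(2) \<sigma>(5)] cycle(1)
      by (auto simp: N_def C_def)
    then show ?thesis using T(2) by blast
  qed
  ultimately show ?thesis using that by blast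
qed

locale triangle_free_cp_unnested_columns = triangle_free_cp_columns A S
  for A :: "real^'n^'n" and S +
  assumes unnested: "c \<in> S \<Longrightarrow> d \<in> S \<Longrightarrow> c \<noteq> d \<Longrightarrow> \<not> (\<forall>i. 0 < c i \<longrightarrow> 0 < d i)"
begin

definition edge_column :: "'n \<Rightarrow> 'n \<Rightarrow> 'n \<Rightarrow> real" where
  "edge_column p q = (THE c. c \<in> S \<and> c p > 0 \<and> c q > 0)"

lemma columns_eq_if_pos_on_edge:
  assumes "c \<in> S" "d \<in> S" "p \<noteq> q" "c p > 0" "c q > 0" "d p > 0" "d q > 0"
  shows "c = d"
proof (rule ccontr)
  assume "c \<noteq> d"
  have "0 < d i" if "0 < c i" for i
    using column_zero_off_edge[OF assms(1,3-5), of i] that assms(6,7) by (cases "i = p \<or> i = q") auto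
  then show False using unnested assms(1,2) \<open>c \<noteq> d\<close> by blast
qed

lemma edge_column_eq:
  assumes "c \<in> S" "p \<noteq> q" "c p > 0" "c q > 0"
  shows "edge_column p q = c"
  unfolding edge_column_def
proof (rule the_equality)
  fix d assume "d \<in> S \<and> 0 < d p \<and> 0 < d q"
  then show "d = c" using columns_eq_if_pos_on_edge[OF _ assms(1,2) _ _ assms(3,4)] by blast
qed (use assms in simp)

lemma edge_column:
  assumes "graph_edge A p q"
  shows "edge_column p q \<in> S" "edge_column p q p > 0" "edge_column p q q > 0"
proof -
  obtain c where c: "c \<in> S" "c p > 0" "c q > 0" using column_pos_at_edge[OF assms] .
  moreover have "p \<noteq> q" using assms by (simp add: graph_edge_def)
  ultimately have "edge_column p q = c" by (intro edge_column_eq)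
  with c show "edge_column p q \<in> S" "edge_column p q p > 0" "edge_column p q q > 0" by simp_all
qed

lemma edge_column_sym:
  assumes "graph_edge A p q"
  shows "edge_column q p = edge_column p q"
  using edge_column[OF assms] assms by (intro edge_column_eq) (auto simp: graph_edge_def)

lemma edge_column_zero:
  assumes "graph_edge A p q" "l \<noteq> p" "l \<noteq> q"
  shows "edge_column p q l = 0"
  using edge_column[OF assms(1)] assms column_zero_off_edge[of "edge_column p q" p q l]
  by (simp add: graph_edge_def)

lemma entry_eq_edge_column:
  assumes "graph_edge A p q"
  shows "A $ p $ q = edge_column p q p * edge_column p q q"
proof -
  let ?c = "edge_column p q"
  have c: "?c \<in> S" "?c p > 0" "?c q > 0" using edge_column[OF assms] .
  have pq: "p \<noteq> q" using assms by (simp add: graph_edge_def)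
  have "d p * d q = 0" if "d \<in> S - {?c}" for d
  proof (rule ccontr)
    assume "d p * d q \<noteq> 0"
    then have "d p > 0" "d q > 0"
      using column_nonneg[of d p] column_nonneg[of d q] that by (auto simp: less_le)
    then show False using columns_eq_if_pos_on_edge[OF _ c(1) pq _ _ c(2,3)] that by blast
  qed
  then have "(\<Sum>d\<in>S - {?c}. d p * d q) = 0" by (rule sum.neutral[OF ballI])
  then show ?thesis using entry_eq_sum[of p q] c(1) finite_columns by (simp add: sum.remove)
qed

lemma column_pos_on_two_vertices:
  assumes "c \<in> S"
  obtains p q where "p \<noteq> q" "c p > 0" "c q > 0"
proof -
  obtain p q where pq: "p \<noteq> q" "c p > 0" "\<forall>l. l \<noteq> p \<and> l \<noteq> q \<longrightarrow> c l = 0"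
    using column_support_pair[OF assms] .
  show ?thesis
  proof (cases "c q > 0")
    case True
    then show ?thesis using that pq by blast
  next
    case False
    then have c: "c l > 0 \<longleftrightarrow> l = p" for l using pq by (metis less_irrefl)
    obtain j where e: "graph_edge A p j" using exists_edge by blast
    then have "edge_column p j \<noteq> c" "\<forall>i. 0 < c i \<longrightarrow> 0 < edge_column p j i"
      using edge_column[OF e] c by (auto simp: graph_edge_def)
    then show ?thesis using unnested[OF assms edge_column(1)[OF e]] by simp
  qed
qed

lemma inj_on_pos_support: "inj_on pos_support S"
proof (rule inj_onI)
  fix c d assume "c \<in> S" "d \<in> S" "pos_support c = pos_support d"
  then show "c = d" using unnested by (auto simp: pos_support_def)
qed

text \<open>If the column ratios along edges come from a positive potential \<open>y\<close>, then every column
  satisfies \<open>c\<^sub>p y\<^sub>p = c\<^sub>q y\<^sub>q\<close> on its edge, which puts \<open>y\<close> into the kernel of \<open>M(A)\<close>.\<close>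

lemma singular_if_potential:
  assumes y_pos: "\<forall>v. y v > 0"
    and potential: "\<forall>i j. graph_edge A i j \<longrightarrow> y j = y i * (edge_column i j i / edge_column i j j)"
  shows "\<not> invertible (comparison_matrix A)"
proof -
  have balanced: "c i * (2 * c i * y i - (\<Sum>j\<in>UNIV. c j * y j)) = 0" if c: "c \<in> S" for c i
  proof (cases "c i > 0")
    case False
    then show ?thesis using column_nonneg[OF c, of i] by simp
  next
    case True
    obtain p q where pq: "p \<noteq> q" "c p > 0" "c q > 0" using column_pos_on_two_vertices[OF c] .
    define k where "k = (if i = p then q else p)"
    have i: "i = p \<or> i = q" using column_zero_off_edge[OF c pq, of i] True by auto
    then have k: "k \<noteq> i" "c k > 0" "\<forall>l. l \<noteq> i \<and> l \<noteq> k \<longrightarrow> c l = 0"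
      using pq column_zero_off_edge[OF c pq] by (auto simp: k_def)
    have e: "graph_edge A i k" using graph_edge_if_column_pos[OF c _ True k(2)] k(1) by simp
    have "edge_column i k = c" using edge_column_eq[OF c _ True k(2)] k(1) by simp
    then have "c k * y k = c i * y i" using potential e k(2) by (simp add: field_simps)
    moreover have "(\<Sum>j\<in>UNIV. c j * y j) = c i * y i + c k * y k"
      using k by (intro sum_UNIV_two_points) auto
    ultimately show ?thesis by simp
  qed
  have "comparison_mv A y i = (\<Sum>c\<in>S. c i * (2 * c i * y i - (\<Sum>j\<in>UNIV. c j * y j)))" for i
    unfolding comparison_mv_def entry_eq_sum
    by (simp add: sum_distrib_left sum_distrib_right sum_subtractf right_diff_distrib
        sum.swap[of _ S] algebra_simps)
  then have kernel: "comparison_mv A y i = 0" for i using balanced by simp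
  define Y where "Y = (\<chi> j. y j)"
  have "comparison_matrix A *v Y = 0"
    by (simp add: vec_eq_iff comparison_matrix_mult Y_def kernel)
  moreover have "Y \<noteq> 0" using y_pos by (metis Y_def vec_lambda_beta zero_index less_irrefl)
  ultimately show ?thesis unfolding invertible_left_inverse matrix_left_invertible_ker by blast
qed

lemma edge_column_eq_cycle_column:
  assumes "graph_edge A (w i) (w (Suc i))"
    and "s i = (edge_column (w i) (w (Suc i)) (w i))\<^sup>2" "a i = A $ w i $ w (Suc i)"
  shows "edge_column (w i) (w (Suc i)) = cycle_column w a s i"
proof -
  let ?c = "edge_column (w i) (w (Suc i))"
  have c: "?c (w i) > 0" "?c (w (Suc i)) > 0" using edge_column[OF assms(1)] by simp_all
  have "sqrt (s i) = ?c (w i)" using assms(2) c(1) by simp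
  moreover have "a i = ?c (w i) * ?c (w (Suc i))" using assms(3) entry_eq_edge_column[OF assms(1)] by simp
  ultimately show ?thesis
    using c edge_column_zero[OF assms(1)] assms(1) by (auto simp: fun_eq_iff cycle_column_def graph_edge_def)
qed

text \<open>A column on the edge \<open>w\<^sub>i w\<^sub>i\<^sub>+\<^sub>1\<close> is fixed by \<open>a\<^sub>i = A\<^sub>w\<^sub>i\<^sub>w\<^sub>i\<^sub>+\<^sub>1\<close> and the square \<open>\<sigma>\<^sub>i\<close> of its
  entry at \<open>w\<^sub>i\<close>; its entry at \<open>w\<^sub>i\<^sub>+\<^sub>1\<close> contributes \<open>a\<^sub>i\<^sup>2 / \<sigma>\<^sub>i\<close> to the diagonal. A ratio product
  below \<open>1\<close> makes the actual \<open>\<sigma>\<close> a repelling periodic orbit of the resulting recurrence, so a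
  second periodic orbit exists and yields different columns with the same contribution to \<open>A\<close>.\<close>

lemma cp_columns_deform_along_cycle:
  assumes cycle: "3 \<le> m" "w m = w 0" "\<forall>i<m. graph_edge A (w i) (w (Suc i))"
      "\<forall>a b. a < b \<and> b \<le> m \<and> w a = w b \<longrightarrow> a = 0 \<and> b = m"
    and ratio: "(\<Prod>i<m. edge_column (w i) (w (Suc i)) (w i) / edge_column (w i) (w (Suc i)) (w (Suc i))) < 1"
  obtains T where "cp_columns A T" "card T = card S" "T \<noteq> S"
proof -
  define a where "a i = A $ w i $ w (Suc i)" for i
  define \<sigma> where "\<sigma> i = (edge_column (w (i mod m)) (w (Suc (i mod m))) (w (i mod m)))\<^sup>2" for i
  have edge: "w i \<noteq> w (Suc i)" if "i < m" for i using cycle(3) that by (simp add: graph_edge_def)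
  have old: "edge_column (w i) (w (Suc i)) = cycle_column w a \<sigma> i" if "i < m" for i
    using cycle(3) that by (intro edge_column_eq_cycle_column) (simp_all add: \<sigma>_def a_def)
  have a_pos: "\<forall>i<m. 0 < a i"
    using cycle(3) entry_nonneg unfolding a_def graph_edge_def by (metis less_le)
  have \<sigma>_pos: "\<forall>i\<le>m. 0 < \<sigma> i"
  proof (intro allI impI)
    fix i
    have "i mod m < m" using cycle(1) by simp
    then have "0 < edge_column (w (i mod m)) (w (Suc (i mod m))) (w (i mod m))"
      using edge_column(2) cycle(3) by blast
    then show "0 < \<sigma> i" by (simp add: \<sigma>_def)
  qed
  have \<sigma>_per: "\<sigma> m = \<sigma> 0" by (simp add: \<sigma>_def)
  have "edge_column (w i) (w (Suc i)) (w i) / edge_column (w i) (w (Suc i)) (w (Suc i)) = \<sigma> i / a i"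
    if "i < m" for i
  proof -
    have "0 < \<sigma> i" using \<sigma>_pos that by simp
    then show ?thesis using old[OF that] edge[OF that] by (simp add: cycle_column_def)
  qed
  then have "(\<Prod>i<m. \<sigma> i / a i) < 1" using ratio by simp
  moreover have "0 < (\<Prod>i<m. \<sigma> i / a i)" using \<sigma>_pos a_pos by (intro prod_pos) simp
  ultimately have "1 < (inverse (\<Prod>i<m. \<sigma> i / a i))\<^sup>2"
    by (intro one_less_power one_less_inverse) simp_all
  also have "\<dots> = (\<Prod>i<m. (a i)\<^sup>2 / (\<sigma> i)\<^sup>2)"
    by (simp add: prod_inversef[symmetric] prod_power_distrib power_divide)
  finally have "(\<Prod>i<m. (a i)\<^sup>2 / (\<sigma> i)\<^sup>2) > 1" .
  then obtain s where s: "\<sigma> 0 < s" "mobius_orbit (\<lambda>i. (a i)\<^sup>2) \<sigma> s m = s"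
    "\<forall>i\<le>m. 0 < mobius_orbit (\<lambda>i. (a i)\<^sup>2) \<sigma> s i"
    using larger_periodic_mobius_orbit[of m "\<lambda>i. (a i)\<^sup>2" \<sigma>] cycle(1) \<sigma>_pos \<sigma>_per by auto
  show ?thesis
  proof (rule cp_columns_exchange_cycle[where \<sigma>' = "mobius_orbit (\<lambda>i. (a i)\<^sup>2) \<sigma> s"])
    show "cp_columns A S" "inj_on pos_support S" "\<forall>e\<in>S. pos_support e \<noteq> {}"
      using cp_columns inj_on_pos_support column_nonzero by (auto simp: pos_support_def)
    show "\<forall>i<m. cycle_column w a \<sigma> i \<in> S" using old edge_column(1) cycle(3) by metis
  qed (use that cycle(1,2,4) edge a_pos \<sigma>_pos \<sigma>_per s in auto)
qed

end

lemma (in triangle_free_cp_columns) cp_columns_not_unique_if_invertible: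
  assumes "invertible (comparison_matrix A)"
  obtains T where "cp_columns A T" "card T = card S" "T \<noteq> S"
proof (cases "\<exists>c\<in>S. \<exists>d\<in>S. c \<noteq> d \<and> (\<forall>i. 0 < c i \<longrightarrow> 0 < d i)")
  case True
  then obtain c d where "c \<in> S" "d \<in> S" "c \<noteq> d" "\<forall>i. 0 < c i \<longrightarrow> 0 < d i" by blast
  from cp_columns_rotate[OF cp_columns this] that show ?thesis by blast
next
  case False
  interpret U: triangle_free_cp_unnested_columns A S using False by unfold_locales blast
  define r where "r i j = U.edge_column i j i / U.edge_column i j j" for i j
  interpret W: weighted_graph "graph_edge A" r
  proof
    fix i j assume e: "graph_edge A i j"
    then show "graph_edge A j i" by (rule graph_edge_sym)
    show "r i j > 0" using U.edge_column[OF e] by (simp add: r_def)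
    show "r j i * r i j = 1" using U.edge_column[OF e] U.edge_column_sym[OF e] by (simp add: r_def)
  qed (simp add: graph_edge_def)
  have "\<not> (\<forall>m w. W.closed_walk m w \<longrightarrow> W.walk_weight m w = 1)"
  proof
    assume "\<forall>m w. W.closed_walk m w \<longrightarrow> W.walk_weight m w = 1"
    then obtain y where "\<forall>v. y v > 0" "\<forall>i j. graph_edge A i j \<longrightarrow> y j = y i * r i j"
      using W.potential_if_closed_walk_weights_1 irreducible by (auto simp: irreducible_mat_def)
    then have "\<not> invertible (comparison_matrix A)"
      by (intro U.singular_if_potential) (simp_all add: r_def)
    with assms show False by simp
  qed
  then obtain m0 w0 where "W.closed_walk m0 w0" "W.walk_weight m0 w0 \<noteq> 1" by blast
  then obtain m w where cycle: "W.closed_walk m w" "W.walk_weight m w < 1" "3 \<le> m"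
    "\<forall>a b. a < b \<and> b \<le> m \<and> w a = w b \<longrightarrow> a = 0 \<and> b = m"
    by (rule W.simple_closed_walk_weight_less_1)
  show ?thesis
    by (rule U.cp_columns_deform_along_cycle[OF cycle(3) _ _ cycle(4)])
      (use cycle(1,2) that in \<open>simp_all add: W.closed_walk_def W.walk_weight_def r_def\<close>)
qed

theorem theorem4p1:
  fixes A :: "real^'n^'n"
  assumes "CARD('n) \<ge> 2"
    and "irreducible_mat A"
    and "completely_positive A"
    and "triangle_free_graph A"
  shows "(\<not> invertible (comparison_matrix A) \<longleftrightarrow> unique_cp_factorization A) \<and>
         (unique_cp_factorization A \<longleftrightarrow> unique_minimal_cp_factorization A)"
proof -
  have tf: "triangle_free_cp A" using assms(1,2,4) by unfold_locales
  obtain S where S: "cp_columns A S" "card S = cp_rank A"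
    using minimal_cp_columns_exists[OF assms(3)] .
  interpret triangle_free_cp_columns A S using tf S(1) by (simp add: triangle_free_cp_columns_def
      triangle_free_cp_columns_axioms_def)
  have "unique_cp_factorization A" if "\<not> invertible (comparison_matrix A)"
    unfolding unique_cp_factorization_iff_columns
    using S(1) cp_columns_unique_if_singular[OF tf that] by blast
  moreover have "\<not> invertible (comparison_matrix A)" if "unique_minimal_cp_factorization A"
    using cp_columns_not_unique_if_invertible S that
    unfolding unique_minimal_cp_factorization_iff_columns by metis
  moreover have "unique_minimal_cp_factorization A" if "unique_cp_factorization A"
    using S that unfolding unique_cp_factorization_iff_columns unique_minimal_cp_factorization_iff_columns
    by blast
  ultimately show ?thesis by blast
qed

end
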